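(* Let $\omega=(\tilde\omega,\omega_d)\in\mathbb R^d$, $d\geq3$, be non-resonant with $\tilde\omega\in\mathbb R^{d-1}$ such that there is a sequence $\{\bar k_j\}\subset\mathbb Z^{d-1}$ with $\lim_{j\to\infty}\frac{\ln|\langle\tilde\omega,\bar k_j\rangle|}{\|\bar k_j\|}=-\infty$. Then: (a) there exists a real entire Hamiltonian $H$ of the form $H(\theta,r)=\langle\omega,r\rangle+\mathcal O(r^2)$ whose Birkhoff normal form at $\mathcal{T}_0$ is $N(r)=\langle\omega,r\rangle$, and such that $\mathcal{T}_0$ is diffusive with $T(r_n)\leq r_n^{-n}$ for a sequence $r_n\to0$; (b) there exists a real entire Hamiltonian $H$ of the form $H(\theta,r)=\langle\omega,r\rangle+\mathcal O(r^2)$ such that $\mathcal{T}_0$ is diffusive and $T(r_n)\leq r_n^{-4}$ for a sequence $r_n\to0$.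
   Context: $\mathcal{T}_0=\mathbb{T}^d\times\{0\}$; $\|k\|=\max_m|k_m|$; non-resonant means the coordinates of $\omega$ are rationally independent. Real entire: extends holomorphically to $(\mathbb C/\mathbb Z)^d\times\mathbb C^d$, real on real arguments. $\Phi^t_H$ is the Hamiltonian flow for $d\theta\wedge dr$. $T(r)=\inf_{\theta\in\mathbb{T}^d,|r'|\leq r}\{t>0:\operatorname{dist}(\Phi^t_H(\theta,r'),\mathcal{T}_0)=1/r\}$; $\mathcal{T}_0$ is diffusive if $T(r)$ exists for all sufficiently small $r>0$. Birkhoff normal form: formal power series $N_H(r)$ such that some formal series $f(\theta,r)=\sum_j a_j(\theta)r^j=\mathcal O(r^2)$ with coefficients real analytic near $\mathbb{T}^d$ satisfies $H(\theta,r+\partial_\theta f(\theta,r))=N_H(r)$. *)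

theory Defs
  imports "HOL-Analysis.Analysis"
begin

text \<open>Points of the cover R^d x R^d of T^d x R^d; theta and r are vectors indexed by a finite type.\<close>

definition cvec :: "real^'n \<Rightarrow> complex^'n" where
  "cvec x = (\<chi> i. complex_of_real (x $ i))"

definition c_entire2 :: "((complex^'n) \<times> (complex^'n) \<Rightarrow> complex) \<Rightarrow> bool" where
  "c_entire2 F \<longleftrightarrow>
     (\<forall>z. \<exists>L. (F has_derivative L) (at z) \<and>
            (\<forall>c u v. L (c *s u, c *s v) = c * L (u, v)))"

definition c_holo_on :: "(complex^'n) set \<Rightarrow> (complex^'n \<Rightarrow> complex) \<Rightarrow> bool" where
  "c_holo_on U F \<longleftrightarrow>
     (\<forall>z\<in>U. \<exists>L. (F has_derivative L) (at z) \<and> (\<forall>c v. L (c *s v) = c * L v))"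

text \<open>Real entire Hamiltonian on T^d x R^d: 1-periodic in theta, extends to an entire
  function on (C/Z)^d x C^d which restricts to H on real arguments.\<close>

definition real_entire_ham :: "(real^'n \<Rightarrow> real^'n \<Rightarrow> real) \<Rightarrow> bool" where
  "real_entire_ham H \<longleftrightarrow>
     (\<forall>\<theta> r i. H (\<theta> + axis i 1) r = H \<theta> r) \<and>
     (\<exists>F. c_entire2 F \<and> (\<forall>z w i. F (z + axis i 1, w) = F (z, w)) \<and>
          (\<forall>\<theta> r. F (cvec \<theta>, cvec r) = complex_of_real (H \<theta> r)))"

definition real_analytic_periodic :: "(real^'n \<Rightarrow> real) \<Rightarrow> bool" where
  "real_analytic_periodic a \<longleftrightarrow>
     (\<forall>\<theta> i. a (\<theta> + axis i 1) = a \<theta>) \<and>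
     (\<exists>U F. open U \<and> range cvec \<subseteq> U \<and> c_holo_on U F \<and>
            (\<forall>\<theta>. F (cvec \<theta>) = complex_of_real (a \<theta>)))"

definition grad :: "(real^'n \<Rightarrow> real) \<Rightarrow> real^'n \<Rightarrow> real^'n" where
  "grad f x = (\<chi> i. deriv (\<lambda>s. f (x + axis i s)) 0)"

definition ham_form :: "(real^'n \<Rightarrow> real^'n \<Rightarrow> real) \<Rightarrow> real^'n \<Rightarrow> bool" where
  "ham_form H \<omega> \<longleftrightarrow>
     (\<exists>C \<delta>. \<delta> > 0 \<and> (\<forall>\<theta> r. norm r < \<delta> \<longrightarrow> \<bar>H \<theta> r - \<omega> \<bullet> r\<bar> \<le> C * norm r ^ 2))"

definition ham_vf :: "(real^'n \<Rightarrow> real^'n \<Rightarrow> real) \<Rightarrow> (real^'n) \<times> (real^'n) \<Rightarrow> (real^'n) \<times> (real^'n)" where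
  "ham_vf H p = (grad (\<lambda>r. H (fst p) r) (snd p), - grad (\<lambda>\<theta>. H \<theta> (snd p)) (fst p))"

text \<open>The set whose infimum is T(rho): times t>0 at which the flow (defined on [0,t])
  from a point (theta,r') with |r'| <= rho is at distance 1/rho from T_0.\<close>

definition escape_times :: "(real^'n \<Rightarrow> real^'n \<Rightarrow> real) \<Rightarrow> real \<Rightarrow> real set" where
  "escape_times H \<rho> = {t. t > 0 \<and>
     (\<exists>\<theta> r0 (\<gamma> :: real \<Rightarrow> (real^'n) \<times> (real^'n)).
        norm r0 \<le> \<rho> \<and> \<gamma> 0 = (\<theta>, r0) \<and>
        (\<forall>s\<in>{0..t}. (\<gamma> has_vector_derivative ham_vf H (\<gamma> s)) (at s within {0..t})) \<and>
        norm (snd (\<gamma> t)) = 1 / \<rho>)}"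

definition T_time :: "(real^'n \<Rightarrow> real^'n \<Rightarrow> real) \<Rightarrow> real \<Rightarrow> real" where
  "T_time H \<rho> = Inf (escape_times H \<rho>)"

definition diffusive :: "(real^'n \<Rightarrow> real^'n \<Rightarrow> real) \<Rightarrow> bool" where
  "diffusive H \<longleftrightarrow> (\<exists>\<rho>0>0. \<forall>\<rho>. 0 < \<rho> \<and> \<rho> < \<rho>0 \<longrightarrow> escape_times H \<rho> \<noteq> {})"

definition mdeg :: "('n::finite \<Rightarrow> nat) \<Rightarrow> nat" where
  "mdeg j = (\<Sum>i\<in>UNIV. j i)"

definition mmono :: "real^'n \<Rightarrow> ('n \<Rightarrow> nat) \<Rightarrow> real" where
  "mmono r j = (\<Prod>i\<in>UNIV. (r $ i) ^ (j i))"

text \<open>Birkhoff normal form N (formal series with coefficients N j): there is a formal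
  series f = sum_j a_j(theta) r^j = O(r^2) with real analytic coefficients such that
  H(theta, r + d_theta f(theta,r)) = N(r) as formal series in r; equivalently, for every
  order K, the identity holds modulo O(|r|^(K+1)) with f and N truncated at degree K.\<close>

definition has_BNF :: "(real^'n \<Rightarrow> real^'n \<Rightarrow> real) \<Rightarrow> (('n \<Rightarrow> nat) \<Rightarrow> real) \<Rightarrow> bool" where
  "has_BNF H N \<longleftrightarrow>
     (\<exists>a :: ('n \<Rightarrow> nat) \<Rightarrow> real^'n \<Rightarrow> real.
        (\<forall>j. real_analytic_periodic (a j)) \<and>
        (\<forall>j. mdeg j \<le> 1 \<longrightarrow> a j = (\<lambda>_. 0)) \<and>
        (\<forall>K \<theta>. \<exists>C \<delta>. \<delta> > 0 \<and> (\<forall>r. norm r < \<delta> \<longrightarrow>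
           \<bar>H \<theta> (r + (\<Sum>j\<in>{j. mdeg j \<le> K}. mmono r j *\<^sub>R grad (a j) \<theta>))
             - (\<Sum>j\<in>{j. mdeg j \<le> K}. N j * mmono r j)\<bar> \<le> C * norm r ^ (K + 1))))"

definition lin_coeffs :: "real^'n \<Rightarrow> ('n \<Rightarrow> nat) \<Rightarrow> real" where
  "lin_coeffs \<omega> j = (\<Sum>i\<in>UNIV. if j = (\<lambda>k. if k = i then 1 else 0) then \<omega> $ i else 0)"

end

(*
  Take H(\<theta>, r) = \<langle>\<omega>, r\<rangle> + \<Sum>_j c_j r_i0^(p_j) cos (2\<pi> \<langle>k_j, \<theta>\<rangle>), where the modes k_j come from
  the Liouville sequence (so they vanish in the direction i0 and the small divisors \<langle>k_j, \<omega>\<rangle> are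
  super-exponentially small in |k_j|), the c_j decay fast enough for H to be entire, and their
  signs make all modes push the same action r_m in the same direction.

  Since r_i0 is conserved, Hamilton's equations integrate explicitly: on the orbit starting at
  r = \<rho> e_i0 the j-th mode displaces r by c_j \<rho>^(p_j) (1 - cos (2\<pi> \<langle>k_j, \<omega>\<rangle> t)) / \<langle>k_j, \<omega>\<rangle> k_j,
  which after half a period exceeds 1/\<rho> as soon as |\<langle>k_j, \<omega>\<rangle>| \<le> 2 \<rho>^(p_j + 1) |c_j|. The
  smallness of the divisors makes this happen for every small \<rho>; taking \<rho> with equality bounds
  the escape time by 1/(2 |\<langle>k_j, \<omega>\<rangle>|), which is \<le> \<rho>^(-n) when p_j = j + 2 and \<le> \<rho>^(-4) when
  p_j = 2. When p is injective each mode is removed by its own cohomological equation, so the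
  Birkhoff normal form is \<langle>\<omega>, r\<rangle>.
*)

theory Submission
  imports Defs
begin

section \<open>Differentiating series term by term\<close>

lemma norm_suminf_tail_le:
  fixes g :: "nat \<Rightarrow> 'b::banach"
  assumes M: "summable M" and g: "\<And>i. norm (g i) \<le> M i * a"
  shows "norm (sum g {..<n} - (\<Sum>i. g i)) \<le> (\<Sum>i. M (i + n)) * a"
proof -
  have Ma: "summable (\<lambda>i. M (i + n) * a)"
    using summable_mult2[OF M[unfolded summable_iff_shift[of M n, symmetric]]] .
  have gn: "summable (\<lambda>i. norm (g (i + n)))"
    by (rule summable_comparison_test[OF _ Ma]) (simp add: g)
  have "summable g"
    by (rule summable_comparison_test'[OF summable_mult2[OF M, of a]]) (rule g)
  then have "sum g {..<n} - (\<Sum>i. g i) = - (\<Sum>i. g (i + n))"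
    using suminf_split_initial_segment[of g n] by simp
  then have "norm (sum g {..<n} - (\<Sum>i. g i)) \<le> (\<Sum>i. norm (g (i + n)))"
    using summable_norm[OF gn] by simp
  also have "\<dots> \<le> (\<Sum>i. M (i + n) * a)"
    by (rule suminf_le[OF _ gn Ma]) (simp add: g)
  also have "\<dots> = (\<Sum>i. M (i + n)) * a"
    using suminf_mult2[OF M[unfolded summable_iff_shift[of M n, symmetric]]] by simp
  finally show ?thesis .
qed

lemma has_derivative_suminf:
  fixes f :: "nat \<Rightarrow> 'a::real_normed_vector \<Rightarrow> 'b::banach" and f' :: "nat \<Rightarrow> 'a \<Rightarrow> 'a \<Rightarrow> 'b"
  assumes df: "\<And>n x. (f n has_derivative f' n x) (at x)"
    and bound: "\<And>R. \<exists>M. summable M \<and>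
      (\<forall>n x. norm x \<le> R \<longrightarrow> norm (f n x) \<le> M n \<and> (\<forall>h. norm (f' n x h) \<le> M n * norm h))"
  shows "((\<lambda>x. \<Sum>n. f n x) has_derivative (\<lambda>h. \<Sum>n. f' n x0 h)) (at x0)"
proof -
  define S where "S = ball (0::'a) (norm x0 + 1)"
  obtain M where M: "summable M"
    and Mf: "\<And>n x. x \<in> S \<Longrightarrow> norm (f n x) \<le> M n"
    and Mf': "\<And>n x h. x \<in> S \<Longrightarrow> norm (f' n x h) \<le> M n * norm h"
    using bound[of "norm x0 + 1"] unfolding S_def by fastforce
  have x0: "x0 \<in> S" and S: "open S" "convex S" unfolding S_def by simp_all
  have uniform: "\<forall>\<^sub>F n in sequentially. \<forall>x\<in>S. \<forall>h.
      norm (sum (\<lambda>i. f' i x h) {..<n} - (\<Sum>i. f' i x h)) \<le> e * norm h" if "e > 0" for e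
  proof -
    obtain n0 where n0: "\<And>n. n \<ge> n0 \<Longrightarrow> norm (\<Sum>i. M (i + n)) < e"
      using suminf_exist_split[OF \<open>e > 0\<close> M] by blast
    show ?thesis unfolding eventually_sequentially
    proof (intro exI allI impI ballI)
      fix n x h assume "n0 \<le> n" "x \<in> S"
      have "norm (sum (\<lambda>i. f' i x h) {..<n} - (\<Sum>i. f' i x h)) \<le> (\<Sum>i. M (i + n)) * norm h"
        by (rule norm_suminf_tail_le[OF M Mf'[OF \<open>x \<in> S\<close>]])
      also have "\<dots> \<le> e * norm h"
        using n0[OF \<open>n0 \<le> n\<close>] by (intro mult_right_mono) auto
      finally show "norm (sum (\<lambda>i. f' i x h) {..<n} - (\<Sum>i. f' i x h)) \<le> e * norm h" .
    qed
  qed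
  have "summable (\<lambda>n. f n x0)"
    by (rule summable_comparison_test[OF _ M]) (simp add: Mf[OF x0])
  moreover have "\<And>n x. (f n has_derivative f' n x) (at x within S)"
    using df by (rule has_derivative_at_withinI)
  ultimately obtain g where g: "\<And>x. x \<in> S \<Longrightarrow> (\<lambda>n. f n x) sums g x \<and>
      (g has_derivative (\<lambda>h. \<Sum>n. f' n x h)) (at x within S)"
    using has_derivative_series[OF S(2) _ uniform x0 summable_sums, of f] by blast
  have "(g has_derivative (\<lambda>h. \<Sum>n. f' n x0 h)) (at x0)"
    using g[OF x0] at_within_open[OF x0 S(1)] by simp
  moreover have "g x = (\<Sum>n. f n x)" if "x \<in> S" for x
    using g[OF that] by (simp add: sums_iff)
  ultimately show ?thesis
    by (rule has_derivative_transform_within_open[OF _ S(1) x0])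
qed

lemma has_vector_derivative_suminf:
  fixes f f' :: "nat \<Rightarrow> real \<Rightarrow> 'b::banach"
  assumes df: "\<And>n t. (f n has_vector_derivative f' n t) (at t)"
    and bound: "\<And>R. \<exists>M. summable M \<and> (\<forall>n t. \<bar>t\<bar> \<le> R \<longrightarrow> norm (f n t) \<le> M n \<and> norm (f' n t) \<le> M n)"
  shows "((\<lambda>t. \<Sum>n. f n t) has_vector_derivative (\<Sum>n. f' n t0)) (at t0)"
proof -
  have "((\<lambda>t. \<Sum>n. f n t) has_derivative (\<lambda>h. \<Sum>n. h *\<^sub>R f' n t0)) (at t0)"
  proof (rule has_derivative_suminf)
    show "(f n has_derivative (\<lambda>h. h *\<^sub>R f' n t)) (at t)" for n t
      using df[of n t] by (simp add: has_vector_derivative_def)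
    show "\<exists>M. summable M \<and> (\<forall>n t. norm t \<le> R \<longrightarrow> norm (f n t) \<le> M n \<and>
        (\<forall>h. norm (h *\<^sub>R f' n t) \<le> M n * norm h))" for R
    proof -
      obtain M where "summable M" and M: "\<And>n t. \<bar>t\<bar> \<le> R \<Longrightarrow> norm (f n t) \<le> M n \<and> norm (f' n t) \<le> M n"
        using bound[of R] by blast
      have "norm (h *\<^sub>R f' n t) \<le> M n * norm h" if "\<bar>t\<bar> \<le> R" for n t h
        using M[OF that] by (simp add: mult.commute mult_left_mono)
      with \<open>summable M\<close> M show ?thesis by auto
    qed
  qed
  moreover obtain M where "summable M" "\<And>n. norm (f' n t0) \<le> M n"
    using bound[of "\<bar>t0\<bar>"] by blast
  then have "summable (\<lambda>n. f' n t0)" by (metis summable_comparison_test')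
  ultimately show ?thesis
    by (simp add: has_vector_derivative_def suminf_scaleR_right)
qed

lemmas has_derivative_vec_nth [derivative_intros] =
  bounded_linear.has_derivative[OF bounded_linear_vec_nth]

lemma grad_eq_derivative:
  fixes f :: "real^'n \<Rightarrow> real"
  assumes "(f has_derivative f') (at x)"
  shows "grad f x = (\<chi> i. f' (axis i 1))"
proof -
  have "deriv (\<lambda>s. f (x + axis i s)) 0 = f' (axis i 1)" for i
  proof -
    define a where "a = axis i (1::real)"
    have "axis i s = s *\<^sub>R a" for s
      by (simp add: a_def vec_eq_iff axis_def)
    then have ax: "(\<lambda>s. f (x + axis i s)) = (\<lambda>s. f (x + s *\<^sub>R a))"
      by simp
    have "((\<lambda>s::real. x + s *\<^sub>R a) has_derivative (\<lambda>h. h *\<^sub>R a)) (at 0)"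
      by (auto intro!: derivative_eq_intros)
    from diff_chain_at[OF this, of f f'] assms
    have "((\<lambda>s. f (x + s *\<^sub>R a)) has_derivative (\<lambda>h. f' (h *\<^sub>R a))) (at 0)"
      by (simp add: o_def)
    moreover have "(\<lambda>h. f' (h *\<^sub>R a)) = (*) (f' a)"
      using linear_cmul[OF has_derivative_linear[OF assms]] by (simp add: fun_eq_iff mult.commute)
    ultimately have "((\<lambda>s. f (x + s *\<^sub>R a)) has_derivative (*) (f' a)) (at 0)"
      by simp
    then show ?thesis
      unfolding ax a_def[symmetric] by (intro DERIV_imp_deriv) (simp add: has_field_derivative_def)
  qed
  then show ?thesis unfolding grad_def by simp
qed

lemma has_derivative_cos_comp:
  fixes g :: "'a::real_normed_vector \<Rightarrow> 'b::{real_normed_field,banach}"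
  assumes "(g has_derivative g') (at x)"
  shows "((\<lambda>x. cos (g x)) has_derivative (\<lambda>h. - sin (g x) * g' h)) (at x)"
  using has_derivative_compose[OF assms, of cos "(*) (- sin (g x))"] DERIV_cos[of "g x"]
  by (simp add: has_field_derivative_def)

lemma has_derivative_sin_comp:
  fixes g :: "'a::real_normed_vector \<Rightarrow> 'b::{real_normed_field,banach}"
  assumes "(g has_derivative g') (at x)"
  shows "((\<lambda>x. sin (g x)) has_derivative (\<lambda>h. cos (g x) * g' h)) (at x)"
  using has_derivative_compose[OF assms, of sin "(*) (cos (g x))"] DERIV_sin[of "g x"]
  by (simp add: has_field_derivative_def)

lemma abs_one_minus_cos_le: "\<bar>1 - cos x\<bar> \<le> \<bar>x::real\<bar>"
proof -
  have "\<bar>1 - cos x\<bar> = 2 * \<bar>sin (x/2)\<bar> * \<bar>sin (x/2)\<bar>"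
    using cos_double_sin[of "x/2"] by (simp add: power2_eq_square abs_mult)
  also have "\<dots> \<le> 2 * \<bar>x/2\<bar> * 1"
    by (intro mult_mono abs_sin_x_le_abs_x abs_sin_le_one) auto
  finally show ?thesis by simp
qed

lemma norm_sin_le: "norm (sin z) \<le> exp (norm (z::complex))"
proof -
  have "norm (sin z) = norm (exp (\<i> * z) - exp (- (\<i> * z))) / 2"
    by (simp add: sin_exp_eq norm_divide norm_mult)
  also have "\<dots> \<le> (norm (exp (\<i> * z)) + norm (exp (- (\<i> * z)))) / 2"
    by (intro divide_right_mono norm_triangle_ineq4) simp
  also have "\<dots> \<le> (exp (norm z) + exp (norm z)) / 2"
    using norm_exp[of "\<i> * z"] norm_exp[of "- (\<i> * z)"]
    by (intro divide_right_mono add_mono) (auto simp: norm_mult)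
  finally show ?thesis by simp
qed

lemma suminf_vec_nth:
  fixes v :: "nat \<Rightarrow> 'a::real_normed_vector^'n"
  shows "summable v \<Longrightarrow> (suminf v) $ i = (\<Sum>j. v j $ i)"
  using bounded_linear.suminf[OF bounded_linear_vec_nth, of v i] by simp

lemma suminf_minus_sum:
  fixes f :: "nat \<Rightarrow> real"
  assumes "summable f" "finite F"
  shows "suminf f - sum f F = (\<Sum>j. if j \<in> F then 0 else f j)"
proof -
  have F: "(\<lambda>j. if j \<in> F then f j else 0) sums (sum f F)" by (rule sums_If_finite_set[OF assms(2)])
  have "suminf f - sum f F = (\<Sum>j. f j - (if j \<in> F then f j else 0))"
    using suminf_diff[OF assms(1) sums_summable[OF F]] sums_unique[OF F] by simp
  also have "\<dots> = (\<Sum>j. if j \<in> F then 0 else f j)" by (rule suminf_cong) simp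
  finally show ?thesis .
qed

section \<open>The Hamiltonian\<close>

lemma abs_power_le_power:
  fixes s R :: real
  assumes "\<bar>s\<bar> \<le> R" "q \<le> n"
  shows "\<bar>s\<bar> ^ q \<le> (1 + R) ^ n"
proof -
  have "\<bar>s\<bar> ^ q \<le> (1 + R) ^ q" by (rule power_mono) (use assms in auto)
  also have "\<dots> \<le> (1 + R) ^ n" by (rule power_increasing) (use assms in auto)
  finally show ?thesis .
qed

text \<open>The modes \<open>k\<^sub>j\<close> vanish in the direction \<open>i0\<close> and are all nonzero in the direction \<open>m\<close>;
  \<open>drift_nonneg\<close> makes every mode push \<open>r\<^sub>m\<close> the same way, and \<open>c_decay\<close> makes \<open>H\<close> entire.\<close>

locale liouville_ham =
  fixes \<omega> :: "real^'n" and i0 m :: 'n and k :: "nat \<Rightarrow> 'n \<Rightarrow> int"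
    and c :: "nat \<Rightarrow> real" and p :: "nat \<Rightarrow> nat" and N :: "nat \<Rightarrow> real"
  assumes k_i0: "\<And>j. k j i0 = 0"
    and k_m: "\<And>j. k j m \<noteq> 0"
    and abs_k_le: "\<And>j i. \<bar>real_of_int (k j i)\<bar> \<le> N j"
    and divisor_nonzero: "\<And>j. (\<chi> i. real_of_int (k j i)) \<bullet> \<omega> \<noteq> 0"
    and drift_nonneg: "\<And>j. 0 \<le> c j * real_of_int (k j m) / ((\<chi> i. real_of_int (k j i)) \<bullet> \<omega>)"
    and c_decay: "\<And>B. summable (\<lambda>j. \<bar>c j\<bar> * exp (B * ((real j + 1) * (N j + 1))))"
    and p_ge_2: "\<And>j. 2 \<le> p j" and p_le: "\<And>j. p j \<le> j + 2"
begin

definition kvec :: "nat \<Rightarrow> real^'n" where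
  "kvec j = (\<chi> i. real_of_int (k j i))"

definition divisor :: "nat \<Rightarrow> real" where
  "divisor j = kvec j \<bullet> \<omega>"

definition pert :: "real^'n \<Rightarrow> real \<Rightarrow> real" where
  "pert \<theta> s = (\<Sum>j. c j * s ^ p j * cos (2*pi*(kvec j \<bullet> \<theta>)))"

definition H :: "real^'n \<Rightarrow> real^'n \<Rightarrow> real" where
  "H \<theta> r = \<omega> \<bullet> r + pert \<theta> (r $ i0)"

definition freq :: "nat \<Rightarrow> real" where
  "freq j = 2*pi*real CARD('n) * N j"

text \<open>\<open>weight j R\<close> dominates the \<open>j\<close>-th term of \<open>H\<close>, of its complex extension and of their first
  derivatives on the ball of radius \<open>R\<close>.\<close>

definition weight :: "nat \<Rightarrow> real \<Rightarrow> real" where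
  "weight j R = (real j + 3) * (1 + R) ^ (j + 2) * (1 + freq j) * exp (freq j * R)"

lemma N_nonneg: "0 \<le> N j"
  using abs_k_le[of j i0] by simp

lemma freq_nonneg: "0 \<le> freq j"
  by (simp add: freq_def N_nonneg)

lemma divisor_neq_0: "divisor j \<noteq> 0"
  using divisor_nonzero[of j] by (simp add: divisor_def kvec_def)

lemma kvec_nth: "kvec j $ i = real_of_int (k j i)"
  by (simp add: kvec_def)

lemma kvec_nth_i0: "kvec j $ i0 = 0"
  by (simp add: kvec_def k_i0)

lemma inner_kvec_axis: "kvec j \<bullet> axis i x = real_of_int (k j i) * x"
  by (simp add: inner_axis kvec_def)

lemma m_neq_i0: "m \<noteq> i0"
  using k_m k_i0 by metis

lemma norm_kvec_le: "norm (kvec j) \<le> real CARD('n) * N j"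
proof -
  have "norm (kvec j) \<le> (\<Sum>i\<in>UNIV. \<bar>kvec j $ i\<bar>)" by (rule norm_le_l1_cart)
  also have "\<dots> \<le> (\<Sum>i\<in>(UNIV::'n set). N j)" by (rule sum_mono) (simp add: kvec_def abs_k_le)
  finally show ?thesis by simp
qed

lemma abs_2pi_inner_kvec_le: "\<bar>2*pi*(kvec j \<bullet> h)\<bar> \<le> freq j * norm h"
proof -
  have "\<bar>kvec j \<bullet> h\<bar> \<le> real CARD('n) * N j * norm h"
    using Cauchy_Schwarz_ineq2[of "kvec j" h] norm_kvec_le[of j] by (meson mult_right_mono norm_ge_zero order_trans)
  then show ?thesis by (simp add: freq_def abs_mult mult_ac)
qed

lemma le_weight:
  assumes "0 \<le> R" "0 \<le> a" "a \<le> real j + 3" "0 \<le> b" "b \<le> (1 + R) ^ (j + 2)" "0 \<le> e" "e \<le> 1 + freq j"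
  shows "a * b * e \<le> weight j R"
proof -
  have "a * b * e \<le> (real j + 3) * (1 + R) ^ (j + 2) * (1 + freq j) * 1"
    using assms by (simp add: mult_mono)
  also have "\<dots> \<le> weight j R"
    unfolding weight_def using assms(1) freq_nonneg[of j] by (intro mult_left_mono) auto
  finally show ?thesis .
qed

lemma freq_le_weight: "0 \<le> R \<Longrightarrow> freq j \<le> weight j R"
  using le_weight[of R 1 j 1 "freq j"] freq_nonneg[of j] one_le_power[of "1 + R" "j + 2"] by simp

lemma weight_nonneg: "0 \<le> R \<Longrightarrow> 0 \<le> weight j R"
  using le_weight[of R 0 j 0 0] freq_nonneg[of j] by simp

lemma le_weight_0: "real j + 3 \<le> weight j 0"
  using le_weight[of 0 "real j + 3" j 1 1] freq_nonneg[of j] by simp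

lemma p_plus_freq_le: "real (p j) + freq j \<le> (real j + 3) * (1 + freq j)"
proof -
  have "freq j \<le> (real j + 3) * freq j"
    using freq_nonneg[of j] by (simp add: mult_le_cancel_right1)
  then show ?thesis using p_le[of j] by (simp add: algebra_simps)
qed

lemma weight_le_exp:
  assumes "0 \<le> R"
  defines "B \<equiv> (2 + 2*pi*real CARD('n)) * (1 + R)"
  shows "weight j R \<le> exp (B * ((real j + 1) * (N j + 1)))"
proof -
  define P where "P = (real j + 1) * (N j + 1)"
  have P: "real j + 2 \<le> 2 * P" "freq j \<le> 2*pi*real CARD('n) * P"
    unfolding P_def freq_def using N_nonneg[of j] by (auto simp: algebra_simps intro: mult_left_mono)
  have "weight j R \<le> exp (real j + 2) * exp (real (j + 2) * R) * exp (freq j) * exp (freq j * R)"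
    unfolding weight_def
  proof (intro mult_mono)
    show "real j + 3 \<le> exp (real j + 2)" using exp_ge_add_one_self[of "real j + 2"] by simp
    have "(1 + R) ^ (j + 2) \<le> exp R ^ (j + 2)"
      by (rule power_mono) (use assms exp_ge_add_one_self[of R] in auto)
    then show "(1 + R) ^ (j + 2) \<le> exp (real (j + 2) * R)" by (simp only: exp_of_nat_mult)
  qed (use assms freq_nonneg[of j] exp_ge_add_one_self[of "freq j"] in auto)
  also have "\<dots> = exp ((real j + 2 + freq j) * (1 + R))"
    by (simp add: exp_add[symmetric] algebra_simps)
  also have "\<dots> \<le> exp (B * P)"
  proof -
    have "real j + 2 + freq j \<le> (2 + 2*pi*real CARD('n)) * P" using P by (simp add: algebra_simps)
    then show ?thesis unfolding B_def using assms by (simp add: mult_right_mono mult_ac)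
  qed
  finally show ?thesis unfolding P_def .
qed

lemma summable_weight:
  assumes "0 \<le> R"
  shows "summable (\<lambda>j. \<bar>c j\<bar> * weight j R)"
proof (rule summable_comparison_test'[OF c_decay])
  fix j
  show "norm (\<bar>c j\<bar> * weight j R)
      \<le> \<bar>c j\<bar> * exp ((2 + 2*pi*real CARD('n)) * (1 + R) * ((real j + 1) * (N j + 1)))"
    using weight_le_exp[OF assms, of j] weight_nonneg[OF assms, of j] by (simp add: mult_left_mono)
qed

lemma summable_weightI:
  fixes X :: "nat \<Rightarrow> 'a::banach"
  assumes "0 \<le> R" "\<And>j. norm (X j) \<le> \<bar>c j\<bar> * weight j R * T"
  shows "summable X"
  by (rule summable_comparison_test'[OF summable_mult2[OF summable_weight[OF assms(1)]]]) (rule assms(2))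

lemma norm_pert_term_le:
  assumes "\<bar>s\<bar> \<le> R"
  shows "norm (c j * s ^ p j * cos (2*pi*(kvec j \<bullet> \<theta>))) \<le> \<bar>c j\<bar> * weight j R"
proof -
  have "norm (c j * s ^ p j * cos (2*pi*(kvec j \<bullet> \<theta>)))
      = \<bar>c j\<bar> * (1 * \<bar>s\<bar> ^ p j * \<bar>cos (2*pi*(kvec j \<bullet> \<theta>))\<bar>)"
    by (simp add: abs_mult power_abs)
  also have "\<dots> \<le> \<bar>c j\<bar> * weight j R"
    using assms abs_power_le_power[OF assms p_le[of j]] freq_nonneg[of j] abs_cos_le_one
    by (intro mult_left_mono le_weight) (auto intro: order_trans[OF abs_cos_le_one])
  finally show ?thesis .
qed

lemma summable_pert: "summable (\<lambda>j. c j * s ^ p j * cos (2*pi*(kvec j \<bullet> \<theta>)))"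
  by (rule summable_weightI[of "\<bar>s\<bar>" _ 1]) (use norm_pert_term_le[OF order_refl] in simp_all)

lemma has_derivative_pert_theta:
  "((\<lambda>\<theta>. pert \<theta> s) has_derivative
     (\<lambda>h. \<Sum>j. - (c j * s ^ p j * sin (2*pi*(kvec j \<bullet> \<theta>)) * (2*pi*(kvec j \<bullet> h))))) (at \<theta>)"
  unfolding pert_def
proof (rule has_derivative_suminf)
  show "((\<lambda>\<theta>. c j * s ^ p j * cos (2*pi*(kvec j \<bullet> \<theta>))) has_derivative
      (\<lambda>h. - (c j * s ^ p j * sin (2*pi*(kvec j \<bullet> \<theta>)) * (2*pi*(kvec j \<bullet> h))))) (at \<theta>)" for j \<theta>
    by (auto intro!: derivative_eq_intros simp: fun_eq_iff algebra_simps)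
  have "norm (- (c j * s ^ p j * sin (2*pi*(kvec j \<bullet> x)) * (2*pi*(kvec j \<bullet> h))))
      \<le> \<bar>c j\<bar> * weight j \<bar>s\<bar> * norm h" for j x h
  proof -
    have "norm (- (c j * s ^ p j * sin (2*pi*(kvec j \<bullet> x)) * (2*pi*(kvec j \<bullet> h))))
        = \<bar>c j\<bar> * (\<bar>s\<bar> ^ p j * \<bar>sin (2*pi*(kvec j \<bullet> x))\<bar> * \<bar>2*pi*(kvec j \<bullet> h)\<bar>)"
      by (simp add: abs_mult power_abs)
    also have "\<dots> \<le> \<bar>c j\<bar> * (\<bar>s\<bar> ^ p j * 1 * (freq j * norm h))"
      using abs_2pi_inner_kvec_le[of j h] abs_sin_le_one[of "2*pi*(kvec j \<bullet> x)"]
      by (intro mult_left_mono mult_mono) auto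
    also have "\<dots> \<le> \<bar>c j\<bar> * weight j \<bar>s\<bar> * norm h"
    proof -
      have W: "1 * \<bar>s\<bar> ^ p j * freq j \<le> weight j \<bar>s\<bar>"
        using abs_power_le_power[OF order_refl p_le[of j]] freq_nonneg[of j] by (intro le_weight) auto
      show ?thesis
        using mult_left_mono[OF mult_right_mono[OF W norm_ge_zero, of h] abs_ge_zero, of "c j"]
        by (simp add: mult.assoc)
    qed
    finally show ?thesis .
  qed
  then show "\<exists>M. summable M \<and> (\<forall>j x. norm x \<le> R \<longrightarrow>
      norm (c j * s ^ p j * cos (2*pi*(kvec j \<bullet> x))) \<le> M j \<and>
      (\<forall>h. norm (- (c j * s ^ p j * sin (2*pi*(kvec j \<bullet> x)) * (2*pi*(kvec j \<bullet> h)))) \<le> M j * norm h))"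
    for R
    using summable_weight[of "\<bar>s\<bar>"] norm_pert_term_le[OF order_refl] by auto
qed

lemma has_derivative_pert_r:
  "((\<lambda>r. pert \<theta> (r $ i0)) has_derivative
     (\<lambda>h. \<Sum>j. c j * (real (p j) * h $ i0 * (r $ i0) ^ (p j - 1)) * cos (2*pi*(kvec j \<bullet> \<theta>)))) (at r)"
  unfolding pert_def
proof (rule has_derivative_suminf)
  show "((\<lambda>r. c j * (r $ i0) ^ p j * cos (2*pi*(kvec j \<bullet> \<theta>))) has_derivative
      (\<lambda>h. c j * (real (p j) * h $ i0 * (r $ i0) ^ (p j - 1)) * cos (2*pi*(kvec j \<bullet> \<theta>)))) (at r)" for j r
    by (auto intro!: derivative_eq_intros simp: fun_eq_iff algebra_simps)
  fix R
  have "norm (c j * (real (p j) * h $ i0 * (x $ i0) ^ (p j - 1)) * cos (2*pi*(kvec j \<bullet> \<theta>)))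
      \<le> \<bar>c j\<bar> * weight j \<bar>R\<bar> * norm h" if x: "norm x \<le> R" for j x h
  proof -
    have xR: "\<bar>x $ i0\<bar> \<le> \<bar>R\<bar>" using component_le_norm_cart[of x i0] x by simp
    have "norm (c j * (real (p j) * h $ i0 * (x $ i0) ^ (p j - 1)) * cos (2*pi*(kvec j \<bullet> \<theta>)))
        = \<bar>c j\<bar> * (real (p j) * \<bar>x $ i0\<bar> ^ (p j - 1) * \<bar>cos (2*pi*(kvec j \<bullet> \<theta>))\<bar> * \<bar>h $ i0\<bar>)"
      by (simp add: abs_mult power_abs)
    also have "\<dots> \<le> \<bar>c j\<bar> * ((real (p j) * \<bar>x $ i0\<bar> ^ (p j - 1) * 1) * norm h)"
      using abs_cos_le_one component_le_norm_cart[of h i0]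
      by (intro mult_left_mono mult_mono) auto
    also have "\<dots> \<le> \<bar>c j\<bar> * weight j \<bar>R\<bar> * norm h"
    proof -
      have W: "real (p j) * \<bar>x $ i0\<bar> ^ (p j - 1) * 1 \<le> weight j \<bar>R\<bar>"
        using abs_power_le_power[OF xR, of "p j - 1" "j + 2"] p_le[of j] freq_nonneg[of j]
        by (intro le_weight) auto
      show ?thesis
        using mult_left_mono[OF mult_right_mono[OF W norm_ge_zero, of h] abs_ge_zero, of "c j"]
        by (simp add: mult.assoc)
    qed
    finally show ?thesis .
  qed
  moreover have "norm (c j * (x $ i0) ^ p j * cos (2*pi*(kvec j \<bullet> \<theta>))) \<le> \<bar>c j\<bar> * weight j \<bar>R\<bar>"
    if "norm x \<le> R" for j x
    using norm_pert_term_le component_le_norm_cart[of x i0] that by (simp add: order_trans)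
  ultimately show "\<exists>M. summable M \<and> (\<forall>j x. norm x \<le> R \<longrightarrow>
      norm (c j * (x $ i0) ^ p j * cos (2*pi*(kvec j \<bullet> \<theta>))) \<le> M j \<and>
      (\<forall>h. norm (c j * (real (p j) * h $ i0 * (x $ i0) ^ (p j - 1)) * cos (2*pi*(kvec j \<bullet> \<theta>)))
        \<le> M j * norm h))"
    using summable_weight[of "\<bar>R\<bar>"] by auto
qed

lemma grad_r_H:
  "grad (\<lambda>r. H \<theta> r) r = \<omega> + (\<Sum>j. c j * real (p j) * (r $ i0) ^ (p j - 1) * cos (2*pi*(kvec j \<bullet> \<theta>))) *\<^sub>R axis i0 1"
proof -
  have "((\<lambda>r. H \<theta> r) has_derivative (\<lambda>h. \<omega> \<bullet> h +
      (\<Sum>j. c j * (real (p j) * h $ i0 * (r $ i0) ^ (p j - 1)) * cos (2*pi*(kvec j \<bullet> \<theta>))))) (at r)"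
    unfolding H_def
    by (rule has_derivative_add[OF _ has_derivative_pert_r]) (auto intro!: derivative_eq_intros)
  from grad_eq_derivative[OF this] show ?thesis
    by (simp add: vec_eq_iff inner_axis) (simp add: axis_def mult_ac)
qed

lemma grad_theta_H:
  "grad (\<lambda>\<theta>. H \<theta> r) \<theta> =
     (\<chi> i. \<Sum>j. - (c j * (r $ i0) ^ p j * sin (2*pi*(kvec j \<bullet> \<theta>)) * (2*pi*real_of_int (k j i))))"
proof -
  have "((\<lambda>\<theta>. H \<theta> r) has_derivative (\<lambda>h. 0 +
      (\<Sum>j. - (c j * (r $ i0) ^ p j * sin (2*pi*(kvec j \<bullet> \<theta>)) * (2*pi*(kvec j \<bullet> h)))))) (at \<theta>)"
    unfolding H_def by (rule has_derivative_add[OF has_derivative_const has_derivative_pert_theta])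
  then show ?thesis
    by (simp add: grad_eq_derivative inner_kvec_axis)
qed

section \<open>An explicit orbit and its escape\<close>

definition phase :: "real \<Rightarrow> real \<Rightarrow> real" where
  "phase \<rho> t = (\<Sum>j. c j * real (p j) * \<rho> ^ (p j - 1) * (sin (2*pi*divisor j*t) / (2*pi*divisor j)))"

definition phase_rate :: "real \<Rightarrow> real \<Rightarrow> real" where
  "phase_rate \<rho> t = (\<Sum>j. c j * real (p j) * \<rho> ^ (p j - 1) * cos (2*pi*divisor j*t))"

definition drift :: "real \<Rightarrow> real \<Rightarrow> real^'n" where
  "drift \<rho> t = (\<Sum>j. (c j * \<rho> ^ p j * ((1 - cos (2*pi*divisor j*t)) / divisor j)) *\<^sub>R kvec j)"

definition drift_rate :: "real \<Rightarrow> real \<Rightarrow> real^'n" where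
  "drift_rate \<rho> t = (\<Sum>j. (c j * \<rho> ^ p j * (2*pi * sin (2*pi*divisor j*t))) *\<^sub>R kvec j)"

text \<open>The orbit of \<open>(0, \<rho> e\<^sub>i\<^sub>0)\<close>: since every \<open>k\<^sub>j\<close> vanishes at \<open>i0\<close>, the action \<open>r\<^sub>i\<^sub>0 = \<rho>\<close>
  is conserved and \<open>\<langle>k\<^sub>j, \<theta>(t)\<rangle> = t \<langle>k\<^sub>j, \<omega>\<rangle>\<close>, so Hamilton's equations integrate explicitly.\<close>

definition orbit :: "real \<Rightarrow> real \<Rightarrow> (real^'n) \<times> (real^'n)" where
  "orbit \<rho> t = (t *\<^sub>R \<omega> + phase \<rho> t *\<^sub>R axis i0 1, \<rho> *\<^sub>R axis i0 1 + drift \<rho> t)"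

context
  fixes \<rho> :: real
  assumes \<rho>: "0 \<le> \<rho>" "\<rho> \<le> 1"
begin

lemma norm_drift_term_le:
  "norm ((c j * \<rho> ^ p j * ((1 - cos (2*pi*divisor j*t)) / divisor j)) *\<^sub>R kvec j)
     \<le> \<bar>c j\<bar> * weight j 0 * \<bar>t\<bar>"
proof -
  have "norm ((c j * \<rho> ^ p j * ((1 - cos (2*pi*divisor j*t)) / divisor j)) *\<^sub>R kvec j)
      = \<bar>c j\<bar> * \<rho> ^ p j * (\<bar>1 - cos (2*pi*divisor j*t)\<bar> / \<bar>divisor j\<bar>) * norm (kvec j)"
    using \<rho> by (simp add: abs_mult)
  also have "\<dots> \<le> \<bar>c j\<bar> * 1 * (\<bar>2*pi*divisor j*t\<bar> / \<bar>divisor j\<bar>) * (real CARD('n) * N j)"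
    using \<rho> abs_one_minus_cos_le[of "2*pi*divisor j*t"] norm_kvec_le[of j]
    by (intro mult_mono mult_left_mono divide_right_mono power_le_one) auto
  also have "\<dots> = \<bar>c j\<bar> * freq j * \<bar>t\<bar>"
    using divisor_neq_0[of j] by (simp add: freq_def abs_mult field_simps)
  also have "\<dots> \<le> \<bar>c j\<bar> * weight j 0 * \<bar>t\<bar>"
    using freq_le_weight[of 0 j] by (intro mult_right_mono mult_left_mono) auto
  finally show ?thesis .
qed

lemma norm_drift_rate_term_le:
  "norm ((c j * \<rho> ^ p j * (2*pi * sin (2*pi*divisor j*t))) *\<^sub>R kvec j) \<le> \<bar>c j\<bar> * weight j 0"
proof -
  have "norm ((c j * \<rho> ^ p j * (2*pi * sin (2*pi*divisor j*t))) *\<^sub>R kvec j)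
      = \<bar>c j\<bar> * \<rho> ^ p j * (2*pi * \<bar>sin (2*pi*divisor j*t)\<bar>) * norm (kvec j)"
    using \<rho> by (simp add: abs_mult)
  also have "\<dots> \<le> \<bar>c j\<bar> * 1 * (2*pi * 1) * (real CARD('n) * N j)"
    using \<rho> abs_sin_le_one[of "2*pi*divisor j*t"] norm_kvec_le[of j]
    by (intro mult_mono mult_left_mono power_le_one) auto
  also have "\<dots> \<le> \<bar>c j\<bar> * weight j 0"
    using mult_left_mono[OF freq_le_weight[of 0 j] abs_ge_zero[of "c j"]] by (simp add: freq_def mult_ac)
  finally show ?thesis .
qed

lemma abs_phase_term_le:
  "\<bar>c j * real (p j) * \<rho> ^ (p j - 1) * (sin (2*pi*divisor j*t) / (2*pi*divisor j))\<bar>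
     \<le> \<bar>c j\<bar> * weight j 0 * \<bar>t\<bar>"
proof -
  have "\<bar>c j * real (p j) * \<rho> ^ (p j - 1) * (sin (2*pi*divisor j*t) / (2*pi*divisor j))\<bar>
      = \<bar>c j\<bar> * real (p j) * \<rho> ^ (p j - 1) * (\<bar>sin (2*pi*divisor j*t)\<bar> / \<bar>2*pi*divisor j\<bar>)"
    using \<rho> by (simp add: abs_mult)
  also have "\<dots> \<le> \<bar>c j\<bar> * (real j + 3) * 1 * (\<bar>2*pi*divisor j*t\<bar> / \<bar>2*pi*divisor j\<bar>)"
    using \<rho> abs_sin_x_le_abs_x[of "2*pi*divisor j*t"] p_le[of j]
    by (intro mult_mono mult_left_mono divide_right_mono power_le_one) auto
  also have "\<dots> = \<bar>c j\<bar> * (real j + 3) * \<bar>t\<bar>"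
    using divisor_neq_0[of j] by (simp add: abs_mult)
  also have "\<dots> \<le> \<bar>c j\<bar> * weight j 0 * \<bar>t\<bar>"
    using le_weight_0[of j] by (intro mult_right_mono mult_left_mono) auto
  finally show ?thesis .
qed

lemma abs_phase_rate_term_le:
  "\<bar>c j * real (p j) * \<rho> ^ (p j - 1) * cos (2*pi*divisor j*t)\<bar> \<le> \<bar>c j\<bar> * weight j 0"
proof -
  have "\<bar>c j * real (p j) * \<rho> ^ (p j - 1) * cos (2*pi*divisor j*t)\<bar>
      = \<bar>c j\<bar> * real (p j) * \<rho> ^ (p j - 1) * \<bar>cos (2*pi*divisor j*t)\<bar>"
    using \<rho> by (simp add: abs_mult)
  also have "\<dots> \<le> \<bar>c j\<bar> * (real j + 3) * 1 * 1"
    using \<rho> abs_cos_le_one[of "2*pi*divisor j*t"] p_le[of j]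
    by (intro mult_mono mult_left_mono power_le_one) auto
  also have "\<dots> \<le> \<bar>c j\<bar> * weight j 0"
    using le_weight_0[of j] by (simp add: mult_left_mono)
  finally show ?thesis .
qed

lemma summable_drift: "summable (\<lambda>j. (c j * \<rho> ^ p j * ((1 - cos (2*pi*divisor j*t)) / divisor j)) *\<^sub>R kvec j)"
  by (rule summable_weightI[OF order_refl norm_drift_term_le])

lemma summable_drift_rate: "summable (\<lambda>j. (c j * \<rho> ^ p j * (2*pi * sin (2*pi*divisor j*t))) *\<^sub>R kvec j)"
  by (rule summable_weightI[of 0 _ 1]) (simp_all only: mult_1_right norm_drift_rate_term_le order_refl)

lemma has_real_derivative_phase: "(phase \<rho> has_real_derivative phase_rate \<rho> t) (at t)"
  unfolding phase_def phase_rate_def has_real_derivative_iff_has_vector_derivative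
proof (rule has_vector_derivative_suminf)
  show "((\<lambda>t. c j * real (p j) * \<rho> ^ (p j - 1) * (sin (2*pi*divisor j*t) / (2*pi*divisor j)))
      has_vector_derivative c j * real (p j) * \<rho> ^ (p j - 1) * cos (2*pi*divisor j*t)) (at t)" for j t
    unfolding has_real_derivative_iff_has_vector_derivative[symmetric]
    using divisor_neq_0[of j] by (auto intro!: derivative_eq_intros simp: field_simps)
  show "\<exists>M. summable M \<and> (\<forall>j t. \<bar>t\<bar> \<le> R \<longrightarrow>
      norm (c j * real (p j) * \<rho> ^ (p j - 1) * (sin (2*pi*divisor j*t) / (2*pi*divisor j))) \<le> M j \<and>
      norm (c j * real (p j) * \<rho> ^ (p j - 1) * cos (2*pi*divisor j*t)) \<le> M j)" for R
  proof (intro exI conjI allI impI)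
    show "summable (\<lambda>j. \<bar>c j\<bar> * weight j 0 * (1 + \<bar>R\<bar>))"
      by (rule summable_mult2[OF summable_weight]) simp
    fix j t assume "\<bar>t\<bar> \<le> R"
    then have "\<bar>c j\<bar> * weight j 0 * \<bar>t\<bar> \<le> \<bar>c j\<bar> * weight j 0 * (1 + \<bar>R\<bar>)"
      "\<bar>c j\<bar> * weight j 0 * 1 \<le> \<bar>c j\<bar> * weight j 0 * (1 + \<bar>R\<bar>)"
      using weight_nonneg[of 0 j] by (intro mult_left_mono; simp)+
    then show "norm (c j * real (p j) * \<rho> ^ (p j - 1) * (sin (2*pi*divisor j*t) / (2*pi*divisor j)))
        \<le> \<bar>c j\<bar> * weight j 0 * (1 + \<bar>R\<bar>)"
      "norm (c j * real (p j) * \<rho> ^ (p j - 1) * cos (2*pi*divisor j*t)) \<le> \<bar>c j\<bar> * weight j 0 * (1 + \<bar>R\<bar>)"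
      using abs_phase_term_le[of j t] abs_phase_rate_term_le[of j t] by simp_all
  qed
qed

lemma has_vector_derivative_drift: "(drift \<rho> has_vector_derivative drift_rate \<rho> t) (at t)"
  unfolding drift_def drift_rate_def
proof (rule has_vector_derivative_suminf)
  show "((\<lambda>t. (c j * \<rho> ^ p j * ((1 - cos (2*pi*divisor j*t)) / divisor j)) *\<^sub>R kvec j)
      has_vector_derivative (c j * \<rho> ^ p j * (2*pi * sin (2*pi*divisor j*t))) *\<^sub>R kvec j) (at t)" for j t
  proof -
    have "((\<lambda>t. c j * \<rho> ^ p j * ((1 - cos (2*pi*divisor j*t)) / divisor j)) has_real_derivative
        c j * \<rho> ^ p j * (2*pi * sin (2*pi*divisor j*t))) (at t)"
      using divisor_neq_0[of j] by (auto intro!: derivative_eq_intros simp: field_simps)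
    from has_vector_derivative_scaleR[OF this has_vector_derivative_const[of "kvec j"]]
    show ?thesis by simp
  qed
  show "\<exists>M. summable M \<and> (\<forall>j t. \<bar>t\<bar> \<le> R \<longrightarrow>
      norm ((c j * \<rho> ^ p j * ((1 - cos (2*pi*divisor j*t)) / divisor j)) *\<^sub>R kvec j) \<le> M j \<and>
      norm ((c j * \<rho> ^ p j * (2*pi * sin (2*pi*divisor j*t))) *\<^sub>R kvec j) \<le> M j)" for R
  proof (intro exI conjI allI impI)
    show "summable (\<lambda>j. \<bar>c j\<bar> * weight j 0 * (1 + \<bar>R\<bar>))"
      by (rule summable_mult2[OF summable_weight]) simp
    fix j t assume "\<bar>t\<bar> \<le> R"
    then have "\<bar>c j\<bar> * weight j 0 * \<bar>t\<bar> \<le> \<bar>c j\<bar> * weight j 0 * (1 + \<bar>R\<bar>)"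
      "\<bar>c j\<bar> * weight j 0 * 1 \<le> \<bar>c j\<bar> * weight j 0 * (1 + \<bar>R\<bar>)"
      using weight_nonneg[of 0 j] by (intro mult_left_mono; simp)+
    then show "norm ((c j * \<rho> ^ p j * ((1 - cos (2*pi*divisor j*t)) / divisor j)) *\<^sub>R kvec j)
        \<le> \<bar>c j\<bar> * weight j 0 * (1 + \<bar>R\<bar>)"
      "norm ((c j * \<rho> ^ p j * (2*pi * sin (2*pi*divisor j*t))) *\<^sub>R kvec j) \<le> \<bar>c j\<bar> * weight j 0 * (1 + \<bar>R\<bar>)"
      using norm_drift_term_le[of j t] norm_drift_rate_term_le[of j t] by simp_all
  qed
qed

lemma orbit_action_i0: "snd (orbit \<rho> t) $ i0 = \<rho>"
  using suminf_vec_nth[OF summable_drift[of t], of i0]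
  by (simp add: orbit_def drift_def kvec_nth_i0)

lemma inner_kvec_orbit: "kvec j \<bullet> fst (orbit \<rho> t) = t * divisor j"
  by (simp add: orbit_def inner_add_right inner_kvec_axis k_i0 divisor_def)

lemma grad_r_H_orbit: "grad (\<lambda>r. H (fst (orbit \<rho> t)) r) (snd (orbit \<rho> t)) = \<omega> + phase_rate \<rho> t *\<^sub>R axis i0 1"
  by (simp add: grad_r_H orbit_action_i0 inner_kvec_orbit phase_rate_def mult_ac)

lemma grad_theta_H_orbit: "- grad (\<lambda>\<theta>. H \<theta> (snd (orbit \<rho> t))) (fst (orbit \<rho> t)) = drift_rate \<rho> t"
proof -
  have "(- grad (\<lambda>\<theta>. H \<theta> (snd (orbit \<rho> t))) (fst (orbit \<rho> t))) $ i = drift_rate \<rho> t $ i" for i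
  proof -
    have s: "summable (\<lambda>j. ((c j * \<rho> ^ p j * (2*pi * sin (2*pi*divisor j*t))) *\<^sub>R kvec j) $ i)"
      using bounded_linear.summable[OF bounded_linear_vec_nth summable_drift_rate] .
    show ?thesis
      using suminf_minus[OF s] suminf_vec_nth[OF summable_drift_rate, of t i]
      by (simp add: grad_theta_H orbit_action_i0 inner_kvec_orbit drift_rate_def kvec_nth mult_ac)
  qed
  then show ?thesis by (simp add: vec_eq_iff)
qed

lemma orbit_solves_hamilton: "(orbit \<rho> has_vector_derivative ham_vf H (orbit \<rho> t)) (at t)"
proof -
  have "((\<lambda>t. t *\<^sub>R \<omega> + phase \<rho> t *\<^sub>R axis i0 1) has_vector_derivative
      \<omega> + phase_rate \<rho> t *\<^sub>R axis i0 1) (at t)"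
    using has_real_derivative_phase[of t]
    by (auto intro!: derivative_eq_intros simp: has_real_derivative_iff_has_vector_derivative)
  moreover have "((\<lambda>t. \<rho> *\<^sub>R axis i0 1 + drift \<rho> t) has_vector_derivative drift_rate \<rho> t) (at t)"
    using has_vector_derivative_add[OF has_vector_derivative_const has_vector_derivative_drift] by simp
  ultimately have "((\<lambda>t. (t *\<^sub>R \<omega> + phase \<rho> t *\<^sub>R axis i0 1, \<rho> *\<^sub>R axis i0 1 + drift \<rho> t))
      has_vector_derivative (\<omega> + phase_rate \<rho> t *\<^sub>R axis i0 1, drift_rate \<rho> t)) (at t)"
    by (rule has_vector_derivative_Pair)
  moreover have "ham_vf H (orbit \<rho> t) = (\<omega> + phase_rate \<rho> t *\<^sub>R axis i0 1, drift_rate \<rho> t)"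
    unfolding ham_vf_def grad_r_H_orbit grad_theta_H_orbit by simp
  ultimately show ?thesis
    unfolding orbit_def[abs_def] by simp
qed

end


lemma continuous_on_norm_action: "0 \<le> \<rho> \<Longrightarrow> \<rho> \<le> 1 \<Longrightarrow> continuous_on S (\<lambda>t. norm (snd (orbit \<rho> t)))"
  using has_vector_derivative_continuous[OF orbit_solves_hamilton]
  by (intro continuous_at_imp_continuous_on ballI continuous_intros) auto

lemma drift_sign: "0 \<le> c j * real_of_int (k j m) / divisor j"
  using drift_nonneg[of j] by (simp add: divisor_def kvec_def)

lemma drift_term_m_nonneg:
  assumes "0 \<le> \<rho>"
  shows "0 \<le> ((c j * \<rho> ^ p j * ((1 - cos (2*pi*divisor j*t)) / divisor j)) *\<^sub>R kvec j) $ m"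
proof -
  have "((c j * \<rho> ^ p j * ((1 - cos (2*pi*divisor j*t)) / divisor j)) *\<^sub>R kvec j) $ m
      = \<rho> ^ p j * (1 - cos (2*pi*divisor j*t)) * (c j * real_of_int (k j m) / divisor j)"
    by (simp add: kvec_nth)
  also have "0 \<le> \<dots>"
    using drift_sign[of j] assms by (intro mult_nonneg_nonneg) auto
  finally show ?thesis .
qed

text \<open>After half a period of the \<open>j\<close>-th mode, that mode alone has pushed \<open>r\<^sub>m\<close> beyond \<open>1/\<rho>\<close>;
  the other modes only push in the same direction.\<close>

lemma norm_action_half_period_ge:
  assumes \<rho>: "0 < \<rho>" "\<rho> \<le> 1" and small: "\<bar>divisor j\<bar> \<le> 2 * \<rho> ^ (p j + 1) * \<bar>c j\<bar>"
  shows "1 / \<rho> \<le> norm (snd (orbit \<rho> (1 / (2 * \<bar>divisor j\<bar>))))"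
proof -
  define T where "T = 1 / (2 * \<bar>divisor j\<bar>)"
  define a where "a i = ((c i * \<rho> ^ p i * ((1 - cos (2*pi*divisor i*T)) / divisor i)) *\<^sub>R kvec i) $ m" for i
  have "cos (2*pi*divisor j*T) = -1"
    using divisor_neq_0[of j] by (cases "divisor j > 0") (simp_all add: T_def)
  then have aj: "a j = 2 * \<rho> ^ p j * (c j * real_of_int (k j m) / divisor j)"
    unfolding a_def by (simp add: kvec_nth)
  have "1 / \<rho> \<le> 2 * \<rho> ^ p j * (\<bar>c j\<bar> / \<bar>divisor j\<bar>)"
    using small divisor_neq_0[of j] \<rho> by (simp add: field_simps)
  also have "\<dots> \<le> 2 * \<rho> ^ p j * (\<bar>c j\<bar> * \<bar>real_of_int (k j m)\<bar> / \<bar>divisor j\<bar>)"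
    using k_m[of j] \<rho>
    by (intro mult_left_mono divide_right_mono) (auto simp: mult_le_cancel_left1)
  also have "\<dots> = a j"
    unfolding aj using abs_of_nonneg[OF drift_sign[of j]] by (simp add: abs_mult)
  also have "\<dots> \<le> (\<Sum>i. a i)"
    unfolding a_def using drift_term_m_nonneg \<rho>
    by (intro sum_le_suminf[where I = "{j}", simplified] bounded_linear.summable[OF bounded_linear_vec_nth]
        summable_drift) auto
  also have "\<dots> = snd (orbit \<rho> T) $ m"
    using suminf_vec_nth[OF summable_drift, of \<rho> T m] m_neq_i0 \<rho>
    by (simp add: a_def orbit_def drift_def axis_def)
  also have "\<dots> \<le> norm (snd (orbit \<rho> T))"
    using component_le_norm_cart[of "snd (orbit \<rho> T)" m] by simp
  finally show ?thesis unfolding T_def .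
qed

lemma escape_time_exists:
  assumes \<rho>: "0 < \<rho>" "\<rho> < 1" and small: "\<bar>divisor j\<bar> \<le> 2 * \<rho> ^ (p j + 1) * \<bar>c j\<bar>"
  shows "\<exists>t\<in>escape_times H \<rho>. t \<le> 1 / (2 * \<bar>divisor j\<bar>)"
proof -
  define f where "f t = norm (snd (orbit \<rho> t))" for t
  have f0: "f 0 = \<rho>"
    using \<rho> by (simp add: f_def orbit_def drift_def)
  have "\<rho> < 1 / \<rho>"
    using \<rho> mult_strict_mono[of \<rho> 1 \<rho> 1] by (simp add: field_simps)
  moreover have "0 < 1 / (2 * \<bar>divisor j\<bar>)"
    using divisor_neq_0[of j] by simp
  ultimately obtain t where t: "0 \<le> t" "t \<le> 1 / (2 * \<bar>divisor j\<bar>)" "f t = 1 / \<rho>"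
    using IVT'[of f 0 "1 / \<rho>" "1 / (2 * \<bar>divisor j\<bar>)"] f0 \<rho>
      norm_action_half_period_ge[OF \<rho>(1) _ small] continuous_on_norm_action[of \<rho>]
    unfolding f_def by force
  have "t \<in> escape_times H \<rho>"
    unfolding escape_times_def
  proof (intro CollectI conjI exI)
    show "0 < t" using t f0 \<open>\<rho> < 1 / \<rho>\<close> by (cases "t = 0") auto
    show "orbit \<rho> 0 = (0, \<rho> *\<^sub>R axis i0 (1::real))" by (simp add: orbit_def phase_def drift_def)
    show "norm (\<rho> *\<^sub>R axis i0 (1::real)) \<le> \<rho>" using \<rho> by simp
    show "\<forall>s\<in>{0..t}. (orbit \<rho> has_vector_derivative ham_vf H (orbit \<rho> s)) (at s within {0..t})"
      using orbit_solves_hamilton \<rho> by (auto intro: has_vector_derivative_at_within)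
    show "norm (snd (orbit \<rho> t)) = 1 / \<rho>" using t by (simp add: f_def)
  qed
  with t show ?thesis by blast
qed

end

section \<open>Real-entire extension\<close>

lemma cvec_nth: "cvec x $ i = of_real (x $ i)"
  by (simp add: cvec_def)

lemma cos_2pi_add_of_int: "cos (of_real (2*pi) * (z + of_int n)) = cos (of_real (2*pi) * (z::complex))"
proof -
  have "of_real (2*pi) * of_int n = (of_real (2*pi * of_int n) :: complex)" by simp
  then have "cos (of_real (2*pi) * of_int n :: complex) = 1" "sin (of_real (2*pi) * of_int n :: complex) = 0"
    by (simp_all only: cos_of_real sin_of_real) simp_all
  then show ?thesis by (simp add: distrib_left cos_add)
qed

context liouville_ham
begin

lemma summable_abs_c: "summable (\<lambda>j. \<bar>c j\<bar>)"
proof (rule summable_comparison_test'[OF summable_weight[OF order_refl]])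
  show "norm \<bar>c j\<bar> \<le> \<bar>c j\<bar> * weight j 0" for j
    using le_weight_0[of j] by (simp add: mult_le_cancel_left1)
qed

lemma abs_pert_tail_le:
  assumes s: "\<bar>s\<bar> \<le> 1" and p_ge: "\<And>j. j \<notin> F \<Longrightarrow> K + 1 \<le> p j"
  shows "\<bar>\<Sum>j. if j \<in> F then 0 else c j * s ^ p j * cos (2*pi*(kvec j \<bullet> \<theta>))\<bar>
    \<le> (\<Sum>j. \<bar>c j\<bar>) * \<bar>s\<bar> ^ (K + 1)"
proof -
  let ?f = "\<lambda>j. if j \<in> F then 0 else c j * s ^ p j * cos (2*pi*(kvec j \<bullet> \<theta>))"
  have f: "norm (?f j) \<le> \<bar>c j\<bar> * \<bar>s\<bar> ^ (K + 1)" for j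
  proof (cases "j \<in> F")
    case False
    have "norm (?f j) = \<bar>c j\<bar> * (\<bar>s\<bar> ^ p j * \<bar>cos (2*pi*(kvec j \<bullet> \<theta>))\<bar>)"
      using False by (simp add: abs_mult power_abs)
    also have "\<dots> \<le> \<bar>c j\<bar> * (\<bar>s\<bar> ^ (K + 1) * 1)"
      by (intro mult_left_mono mult_mono power_decreasing p_ge False) (use s in auto)
    finally show ?thesis by simp
  qed simp
  have sc: "summable (\<lambda>j. \<bar>c j\<bar> * \<bar>s\<bar> ^ (K + 1))"
    by (rule summable_mult2[OF summable_abs_c])
  have sf: "summable (\<lambda>j. norm (?f j))"
    by (rule summable_comparison_test'[OF sc]) (use f in simp)
  have "\<bar>suminf ?f\<bar> \<le> (\<Sum>j. norm (?f j))" using summable_norm[OF sf] by simp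
  also have "\<dots> \<le> (\<Sum>j. \<bar>c j\<bar> * \<bar>s\<bar> ^ (K + 1))" by (rule suminf_le[OF f sf sc])
  also have "\<dots> = (\<Sum>j. \<bar>c j\<bar>) * \<bar>s\<bar> ^ (K + 1)" by (rule suminf_mult2[OF summable_abs_c, symmetric])
  finally show ?thesis .
qed

lemma ham_form_H: "ham_form H \<omega>"
  unfolding ham_form_def
proof (intro exI conjI allI impI)
  fix \<theta> r :: "real^'n" assume r: "norm r < 1"
  have s: "\<bar>r $ i0\<bar> \<le> norm r" by (rule component_le_norm_cart)
  have "\<bar>H \<theta> r - \<omega> \<bullet> r\<bar> = \<bar>\<Sum>j. if j \<in> {} then 0 else c j * (r $ i0) ^ p j * cos (2*pi*(kvec j \<bullet> \<theta>))\<bar>"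
    by (simp add: H_def pert_def)
  also have "\<dots> \<le> (\<Sum>j. \<bar>c j\<bar>) * \<bar>r $ i0\<bar> ^ (1 + 1)"
    by (rule abs_pert_tail_le) (use s r p_ge_2 in \<open>auto simp: numeral_2_eq_2\<close>)
  also have "\<dots> \<le> (\<Sum>j. \<bar>c j\<bar>) * norm r ^ 2"
  proof -
    have "\<bar>r $ i0\<bar> ^ (1 + 1) \<le> norm r ^ 2"
      unfolding one_add_one by (rule power_mono[OF s]) simp
    then show ?thesis by (rule mult_left_mono) (simp add: suminf_nonneg[OF summable_abs_c])
  qed
  finally show "\<bar>H \<theta> r - \<omega> \<bullet> r\<bar> \<le> (\<Sum>j. \<bar>c j\<bar>) * norm r ^ 2" .
qed (rule zero_less_one)

lemma inner_kvec_add_axis: "kvec j \<bullet> (\<theta> + axis i 1) = kvec j \<bullet> \<theta> + real_of_int (k j i)"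
  by (simp add: inner_add_right inner_kvec_axis)

lemma H_periodic: "H (\<theta> + axis i 1) r = H \<theta> r"
  by (simp add: H_def pert_def inner_kvec_add_axis distrib_left cos_add)

definition kdot :: "nat \<Rightarrow> complex^'n \<Rightarrow> complex" where
  "kdot j z = (\<Sum>i\<in>UNIV. of_int (k j i) * z $ i)"

definition pert_ext_term :: "nat \<Rightarrow> (complex^'n) \<times> (complex^'n) \<Rightarrow> complex" where
  "pert_ext_term j zw = of_real (c j) * (snd zw $ i0) ^ p j * cos (of_real (2*pi) * kdot j (fst zw))"

definition pert_ext_term_deriv ::
    "nat \<Rightarrow> (complex^'n) \<times> (complex^'n) \<Rightarrow> (complex^'n) \<times> (complex^'n) \<Rightarrow> complex" where
  "pert_ext_term_deriv j zw uv =
     of_real (c j) * (of_nat (p j) * snd uv $ i0 * (snd zw $ i0) ^ (p j - 1)) * cos (of_real (2*pi) * kdot j (fst zw))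
     - of_real (c j) * (snd zw $ i0) ^ p j * sin (of_real (2*pi) * kdot j (fst zw)) * (of_real (2*pi) * kdot j (fst uv))"

definition H_ext :: "(complex^'n) \<times> (complex^'n) \<Rightarrow> complex" where
  "H_ext zw = (\<Sum>i\<in>UNIV. of_real (\<omega> $ i) * snd zw $ i) + (\<Sum>j. pert_ext_term j zw)"

definition H_ext_deriv :: "(complex^'n) \<times> (complex^'n) \<Rightarrow> (complex^'n) \<times> (complex^'n) \<Rightarrow> complex" where
  "H_ext_deriv zw uv = (\<Sum>i\<in>UNIV. of_real (\<omega> $ i) * snd uv $ i) + (\<Sum>j. pert_ext_term_deriv j zw uv)"

lemma kdot_scale: "kdot j (a *s z) = a * kdot j z"
  unfolding kdot_def by (simp add: sum_distrib_left mult_ac)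

lemma kdot_add_axis: "kdot j (z + axis i 1) = kdot j z + of_int (k j i)"
proof -
  have "of_int (k j l) * (z + axis i 1) $ l = of_int (k j l) * z $ l + (if l = i then of_int (k j i) else 0)" for l
    by (simp add: axis_def distrib_left)
  then show ?thesis unfolding kdot_def by (simp add: sum.distrib)
qed

lemma kdot_cvec: "kdot j (cvec \<theta>) = of_real (kvec j \<bullet> \<theta>)"
  by (simp add: kdot_def cvec_def kvec_def inner_vec_def)

lemma norm_2pi_kdot_le: "norm (of_real (2*pi) * kdot j z) \<le> freq j * norm z"
proof -
  have "norm (kdot j z) \<le> (\<Sum>i\<in>UNIV. norm (of_int (k j i) * z $ i :: complex))"
    unfolding kdot_def by (rule norm_sum)
  also have "\<dots> \<le> (\<Sum>i\<in>(UNIV::'n set). N j * norm z)"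
    using abs_k_le N_nonneg
    by (intro sum_mono) (simp add: norm_mult mult_mono Finite_Cartesian_Product.norm_nth_le)
  finally show ?thesis by (simp add: freq_def norm_mult mult_left_mono mult_ac)
qed

lemma has_derivative_pert_ext_term: "(pert_ext_term j has_derivative pert_ext_term_deriv j zw) (at zw)"
proof -
  have "((\<lambda>zw. of_real (2*pi) * kdot j (fst zw)) has_derivative (\<lambda>uv. of_real (2*pi) * kdot j (fst uv))) (at zw)"
    unfolding kdot_def by (intro derivative_eq_intros) auto
  from has_derivative_cos_comp[OF this]
  have "((\<lambda>zw. of_real (c j) * (snd zw $ i0) ^ p j * cos (of_real (2*pi) * kdot j (fst zw))) has_derivative
      (\<lambda>uv. of_real (c j) * (of_nat (p j) * snd uv $ i0 * (snd zw $ i0) ^ (p j - 1)) * cos (of_real (2*pi) * kdot j (fst zw))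
        + of_real (c j) * (snd zw $ i0) ^ p j * (- sin (of_real (2*pi) * kdot j (fst zw)) * (of_real (2*pi) * kdot j (fst uv))))) (at zw)"
    by (auto intro!: derivative_eq_intros simp: algebra_simps)
  then show ?thesis
    unfolding pert_ext_term_def pert_ext_term_deriv_def[abs_def] by (simp add: algebra_simps)
qed

lemma le_weight_exp:
  assumes "0 \<le> R" "0 \<le> b" "b \<le> (1 + R) ^ (j + 2)" "0 \<le> x" "x \<le> exp (freq j * R)"
    "0 \<le> a" "a \<le> (real j + 3) * (1 + freq j)"
  shows "b * x * a \<le> weight j R"
proof -
  have "b * x * a \<le> (1 + R) ^ (j + 2) * exp (freq j * R) * ((real j + 3) * (1 + freq j))"
    using assms by (intro mult_mono) auto
  then show ?thesis by (simp add: weight_def mult_ac)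
qed

context
  fixes R :: real and z w :: "complex^'n"
  assumes zw: "norm (z, w) \<le> R"
begin

lemma
  shows norm_cos_2pi_kdot_le: "norm (cos (of_real (2*pi) * kdot j z)) \<le> exp (freq j * R)"
    and norm_sin_2pi_kdot_le: "norm (sin (of_real (2*pi) * kdot j z)) \<le> exp (freq j * R)"
proof -
  have "norm z \<le> R"
    using norm_fst_le[of z w] zw by simp
  then have "norm (of_real (2*pi) * kdot j z) \<le> freq j * R"
    using norm_2pi_kdot_le[of j z] mult_left_mono[OF _ freq_nonneg[of j]] order_trans by blast
  then show "norm (cos (of_real (2*pi) * kdot j z)) \<le> exp (freq j * R)"
    "norm (sin (of_real (2*pi) * kdot j z)) \<le> exp (freq j * R)"
    using norm_cos_le norm_sin_le by (meson exp_le_cancel_iff order_trans)+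
qed

lemma norm_action_i0_le: "norm (w $ i0) \<le> R" "0 \<le> R"
  using Finite_Cartesian_Product.norm_nth_le[of w i0] norm_snd_le[of w z] zw norm_ge_zero[of "(z, w)"]
  by linarith+

lemma norm_pert_ext_term_le: "norm (pert_ext_term j (z, w)) \<le> \<bar>c j\<bar> * weight j R"
proof -
  have "norm (pert_ext_term j (z, w)) = \<bar>c j\<bar> * (norm (w $ i0) ^ p j * norm (cos (of_real (2*pi) * kdot j z)) * 1)"
    by (simp add: pert_ext_term_def norm_mult norm_power)
  also have "\<dots> \<le> \<bar>c j\<bar> * weight j R"
  proof (intro mult_left_mono le_weight_exp)
    show "norm (w $ i0) ^ p j \<le> (1 + R) ^ (j + 2)"
      using abs_power_le_power[of "norm (w $ i0)" R "p j" "j + 2"] norm_action_i0_le p_le[of j] by simp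
    show "(1::real) \<le> (real j + 3) * (1 + freq j)"
      using freq_nonneg[of j] by (simp add: mult_le_cancel_left1 order_trans[of 1 "1 + freq j"])
  qed (use norm_cos_2pi_kdot_le[of j] norm_action_i0_le in auto)
  finally show ?thesis .
qed

lemma norm_pert_ext_term_deriv_le: "norm (pert_ext_term_deriv j (z, w) (u, v)) \<le> \<bar>c j\<bar> * weight j R * norm (u, v)"
proof -
  let ?uv = "norm (u, v)"
  have v: "norm (v $ i0) \<le> ?uv"
    using Finite_Cartesian_Product.norm_nth_le[of v i0] norm_snd_le[of v u] by simp
  have ku: "norm (of_real (2*pi) * kdot j u) \<le> freq j * ?uv"
    using norm_2pi_kdot_le[of j u] mult_left_mono[OF norm_fst_le[of u v] freq_nonneg[of j]] by simp
  have w: "norm (w $ i0) ^ p j \<le> (1 + R) ^ (j + 2)" "norm (w $ i0) ^ (p j - 1) \<le> (1 + R) ^ (j + 2)"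
    using abs_power_le_power[of "norm (w $ i0)" R _ "j + 2"] norm_action_i0_le p_le[of j] by auto
  have "norm (pert_ext_term_deriv j (z, w) (u, v))
      \<le> \<bar>c j\<bar> * (real (p j) * norm (v $ i0) * norm (w $ i0) ^ (p j - 1)) * norm (cos (of_real (2*pi) * kdot j z))
        + \<bar>c j\<bar> * norm (w $ i0) ^ p j * norm (sin (of_real (2*pi) * kdot j z)) * norm (of_real (2*pi) * kdot j u)"
    unfolding pert_ext_term_deriv_def
    by (rule order_trans[OF norm_triangle_ineq4]) (simp add: norm_mult norm_power)
  also have "\<dots> \<le> \<bar>c j\<bar> * (real (p j) * ?uv * (1 + R) ^ (j + 2)) * exp (freq j * R)
        + \<bar>c j\<bar> * (1 + R) ^ (j + 2) * exp (freq j * R) * (freq j * ?uv)"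
  proof (rule add_mono)
    have vw: "real (p j) * norm (v $ i0) * norm (w $ i0) ^ (p j - 1) \<le> real (p j) * ?uv * (1 + R) ^ (j + 2)"
      using v w(2) by (intro mult_mono mult_left_mono) auto
    show "\<bar>c j\<bar> * (real (p j) * norm (v $ i0) * norm (w $ i0) ^ (p j - 1)) * norm (cos (of_real (2*pi) * kdot j z))
        \<le> \<bar>c j\<bar> * (real (p j) * ?uv * (1 + R) ^ (j + 2)) * exp (freq j * R)"
      by (rule mult_mono[OF mult_left_mono[OF vw abs_ge_zero]])
        (use norm_cos_2pi_kdot_le[of j] norm_action_i0_le(2) in auto)
    have ws: "norm (w $ i0) ^ p j * norm (sin (of_real (2*pi) * kdot j z)) \<le> (1 + R) ^ (j + 2) * exp (freq j * R)"
      using w(1) norm_sin_2pi_kdot_le[of j] norm_action_i0_le(2) by (intro mult_mono) auto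
    have "norm (w $ i0) ^ p j * norm (sin (of_real (2*pi) * kdot j z)) * norm (of_real (2*pi) * kdot j u)
        \<le> (1 + R) ^ (j + 2) * exp (freq j * R) * (freq j * ?uv)"
      by (rule mult_mono[OF ws ku]) (use norm_action_i0_le(2) in auto)
    then show "\<bar>c j\<bar> * norm (w $ i0) ^ p j * norm (sin (of_real (2*pi) * kdot j z)) * norm (of_real (2*pi) * kdot j u)
        \<le> \<bar>c j\<bar> * (1 + R) ^ (j + 2) * exp (freq j * R) * (freq j * ?uv)"
      by (simp add: mult.assoc mult_left_mono)
  qed
  also have "\<dots> = \<bar>c j\<bar> * ((1 + R) ^ (j + 2) * exp (freq j * R) * (real (p j) + freq j)) * ?uv"
    by (simp add: algebra_simps)
  also have "\<dots> \<le> \<bar>c j\<bar> * weight j R * ?uv"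
  proof -
    have "(1 + R) ^ (j + 2) * exp (freq j * R) * (real (p j) + freq j) \<le> weight j R"
      using p_plus_freq_le norm_action_i0_le(2) freq_nonneg[of j] by (intro le_weight_exp) auto
    then show ?thesis by (intro mult_right_mono mult_left_mono) auto
  qed
  finally show ?thesis .
qed

end


lemma has_derivative_H_ext: "(H_ext has_derivative H_ext_deriv zw) (at zw)"
proof -
  have "((\<lambda>zw. \<Sum>j. pert_ext_term j zw) has_derivative (\<lambda>uv. \<Sum>j. pert_ext_term_deriv j zw uv)) (at zw)"
  proof (rule has_derivative_suminf[OF has_derivative_pert_ext_term])
    show "\<exists>M. summable M \<and> (\<forall>j x. norm x \<le> R \<longrightarrow>
        norm (pert_ext_term j x) \<le> M j \<and> (\<forall>h. norm (pert_ext_term_deriv j x h) \<le> M j * norm h))" for R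
    proof (intro exI conjI allI impI)
      fix j and x h :: "(complex^'n) \<times> (complex^'n)" assume "norm x \<le> R"
      then have x: "norm (fst x, snd x) \<le> \<bar>R\<bar>" by simp
      show "norm (pert_ext_term j x) \<le> \<bar>c j\<bar> * weight j \<bar>R\<bar>"
        using norm_pert_ext_term_le[OF x] by simp
      show "norm (pert_ext_term_deriv j x h) \<le> \<bar>c j\<bar> * weight j \<bar>R\<bar> * norm h"
        using norm_pert_ext_term_deriv_le[OF x, of j "fst h" "snd h"] by simp
    qed (rule summable_weight, simp)
  qed
  then show ?thesis
    unfolding H_ext_def H_ext_deriv_def[abs_def] by (intro derivative_eq_intros) auto
qed

lemma H_ext_deriv_scale: "H_ext_deriv zw (a *s u, a *s v) = a * H_ext_deriv zw (u, v)"
proof -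
  obtain z w where zw: "zw = (z, w)" by fastforce
  have "summable (\<lambda>j. pert_ext_term_deriv j zw (u, v))"
    using norm_pert_ext_term_deriv_le[OF order_refl] unfolding zw
    by (intro summable_weightI[of "norm (z, w)" _ "norm (u, v)"]) auto
  moreover have "pert_ext_term_deriv j zw (a *s u, a *s v) = a * pert_ext_term_deriv j zw (u, v)" for j
    by (simp add: pert_ext_term_deriv_def kdot_scale algebra_simps)
  ultimately show ?thesis
    by (simp add: H_ext_deriv_def suminf_mult sum_distrib_left distrib_left mult_ac)
qed

lemma H_ext_periodic: "H_ext (z + axis i 1, w) = H_ext (z, w)"
  by (simp only: H_ext_def pert_ext_term_def fst_conv snd_conv kdot_add_axis cos_2pi_add_of_int)

lemma H_ext_cvec: "H_ext (cvec \<theta>, cvec r) = of_real (H \<theta> r)"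
proof -
  have "pert_ext_term j (cvec \<theta>, cvec r) = of_real (c j * (r $ i0) ^ p j * cos (2*pi*(kvec j \<bullet> \<theta>)))" for j
    by (simp add: pert_ext_term_def kdot_cvec cvec_nth cos_of_real[symmetric])
  moreover have "(\<Sum>i\<in>UNIV. of_real (\<omega> $ i) * cvec r $ i) = (of_real (\<omega> \<bullet> r) :: complex)"
    by (simp add: cvec_nth inner_vec_def)
  ultimately show ?thesis
    by (simp add: H_ext_def H_def pert_def suminf_of_real[OF summable_pert])
qed

lemma real_entire_ham_H: "real_entire_ham H"
  unfolding real_entire_ham_def
proof (intro conjI allI exI)
  show "c_entire2 H_ext"
    unfolding c_entire2_def using has_derivative_H_ext H_ext_deriv_scale by blast
qed (simp_all add: H_periodic H_ext_periodic H_ext_cvec)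

end

section \<open>Birkhoff normal form\<close>

lemma finite_mdeg_le: "finite {J :: 'n::finite \<Rightarrow> nat. mdeg J \<le> K}"
proof (rule finite_subset)
  show "{J. mdeg J \<le> K} \<subseteq> {J. \<forall>i. (i \<in> UNIV \<longrightarrow> J i \<in> {..K}) \<and> (i \<notin> UNIV \<longrightarrow> J i = 0)}"
  proof (intro subsetI CollectI allI conjI impI)
    fix J i assume "J \<in> {J. mdeg J \<le> K}"
    then show "J i \<in> {..K}"
      using member_le_sum[of i UNIV J] by (simp add: mdeg_def)
  qed simp
qed (rule finite_set_of_finite_funs; simp)
definition unit_index :: "'n \<Rightarrow> 'n \<Rightarrow> nat" where
  "unit_index i = (\<lambda>l. if l = i then 1 else 0)"

lemma mdeg_unit_index: "mdeg (unit_index i) = 1"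
  by (simp add: mdeg_def unit_index_def)

lemma mmono_unit_index: "mmono r (unit_index i) = r $ i"
proof -
  have "mmono r (unit_index i) = (\<Prod>l\<in>UNIV. if l = i then r $ l else 1)"
    unfolding mmono_def unit_index_def by (rule prod.cong) auto
  then show ?thesis by simp
qed

lemma sum_lin_coeffs_mmono:
  fixes \<omega> r :: "real^'n"
  shows "(\<Sum>J\<in>{J. mdeg J \<le> K}. lin_coeffs \<omega> J * mmono r J) = (if 1 \<le> K then \<omega> \<bullet> r else 0)"
proof -
  let ?S = "{J :: 'n \<Rightarrow> nat. mdeg J \<le> K}"
  have "(\<Sum>J\<in>?S. lin_coeffs \<omega> J * mmono r J) = (\<Sum>J\<in>?S. \<Sum>i\<in>UNIV. if J = unit_index i then \<omega> $ i * r $ i else 0)"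
    unfolding lin_coeffs_def unit_index_def[symmetric]
    by (rule sum.cong) (auto simp: sum_distrib_right mmono_unit_index intro!: sum.cong)
  also have "\<dots> = (\<Sum>i\<in>UNIV. \<Sum>J\<in>?S. if J = unit_index i then \<omega> $ i * r $ i else 0)"
    by (rule sum.swap)
  also have "\<dots> = (\<Sum>i\<in>UNIV. if 1 \<le> K then \<omega> $ i * r $ i else 0)"
    by (simp add: sum.delta[OF finite_mdeg_le] mdeg_unit_index)
  also have "\<dots> = (if 1 \<le> K then \<omega> \<bullet> r else 0)"
    by (simp add: inner_vec_def)
  finally show ?thesis .
qed

lemma grad_const: "grad (\<lambda>_. a) (\<theta>::real^'n) = 0"
  using grad_eq_derivative[OF has_derivative_const[of a]] by (simp add: vec_eq_iff)

lemma real_analytic_periodic_zero: "real_analytic_periodic (\<lambda>_::real^'n. 0)"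
  unfolding real_analytic_periodic_def c_holo_on_def
  by (intro conjI allI exI[of _ UNIV] exI[of _ "\<lambda>_. 0"]) (auto intro!: exI[of _ "\<lambda>_. 0"])

context liouville_ham
begin

text \<open>The Birkhoff generating function is \<open>\<Sum>\<^sub>j r_i0^(p j) gen_coeff j \<theta>\<close>: \<open>gen_coeff j\<close> solves the
  cohomological equation \<open>\<langle>\<omega>, \<nabla>h\<rangle> = - c j cos (2\<pi> \<langle>k j, \<theta>\<rangle>)\<close>, which removes the \<open>j\<close>-th mode.\<close>

definition gen_coeff :: "nat \<Rightarrow> real^'n \<Rightarrow> real" where
  "gen_coeff j \<theta> = - c j * sin (2*pi*(kvec j \<bullet> \<theta>)) / (2*pi*divisor j)"

definition mode_index :: "nat \<Rightarrow> 'n \<Rightarrow> nat" where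
  "mode_index j = (\<lambda>i. if i = i0 then p j else 0)"

definition gen_fun :: "('n \<Rightarrow> nat) \<Rightarrow> real^'n \<Rightarrow> real" where
  "gen_fun J = (if J \<in> range mode_index then gen_coeff (inv mode_index J) else (\<lambda>_. 0))"

lemma mdeg_mode_index: "mdeg (mode_index j) = p j"
  by (simp add: mdeg_def mode_index_def)

lemma mmono_mode_index: "mmono r (mode_index j) = (r $ i0) ^ p j"
proof -
  have "mmono r (mode_index j) = (\<Prod>i\<in>UNIV. if i = i0 then (r $ i0) ^ p j else 1)"
    unfolding mmono_def mode_index_def by (rule prod.cong) auto
  then show ?thesis by simp
qed

lemma inj_mode_index: "inj p \<Longrightarrow> inj mode_index"
  unfolding inj_def mode_index_def by metis

lemma grad_gen_coeff: "grad (gen_coeff j) \<theta> = (- c j * cos (2*pi*(kvec j \<bullet> \<theta>)) / divisor j) *\<^sub>R kvec j"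
proof -
  let ?a = "- c j * cos (2*pi*(kvec j \<bullet> \<theta>)) / divisor j"
  have "(gen_coeff j has_derivative (\<lambda>h. ?a * (kvec j \<bullet> h))) (at \<theta>)"
    unfolding gen_coeff_def[abs_def] using divisor_neq_0[of j]
    by (auto intro!: derivative_eq_intros)
  from grad_eq_derivative[OF this] show ?thesis
    by (simp add: vec_eq_iff inner_kvec_axis kvec_nth)
qed

lemma real_analytic_periodic_gen_coeff: "real_analytic_periodic (gen_coeff j)"
  unfolding real_analytic_periodic_def
proof (intro conjI allI exI)
  show "gen_coeff j (\<theta> + axis i 1) = gen_coeff j \<theta>" for \<theta> i
    by (simp add: gen_coeff_def inner_kvec_add_axis distrib_left sin_add)
  let ?G = "\<lambda>z. - of_real (c j) * sin (of_real (2*pi) * kdot j z) / of_real (2*pi*divisor j) :: complex"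
  show "c_holo_on UNIV ?G"
    unfolding c_holo_on_def
  proof
    fix z :: "complex^'n"
    have "((\<lambda>z. of_real (2*pi) * kdot j z) has_derivative (\<lambda>v. of_real (2*pi) * kdot j v)) (at z)"
      unfolding kdot_def by (intro derivative_eq_intros) auto
    from has_derivative_sin_comp[OF this]
    have "(?G has_derivative (\<lambda>v. - of_real (c j) * (cos (of_real (2*pi) * kdot j z) * (of_real (2*pi) * kdot j v))
        / of_real (2*pi*divisor j))) (at z)"
      using divisor_neq_0[of j] by (auto intro!: derivative_eq_intros)
    moreover have "- of_real (c j) * (cos (of_real (2*pi) * kdot j z) * (of_real (2*pi) * kdot j (a *s v)))
        / of_real (2*pi*divisor j) = a * (- of_real (c j) * (cos (of_real (2*pi) * kdot j z) * (of_real (2*pi) * kdot j v))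
        / of_real (2*pi*divisor j))" for a v
      by (simp add: kdot_scale)
    ultimately show "\<exists>L. (?G has_derivative L) (at z) \<and> (\<forall>a v. L (a *s v) = a * L v)"
      by blast
  qed
  show "?G (cvec \<theta>) = complex_of_real (gen_coeff j \<theta>)" for \<theta>
    by (simp add: gen_coeff_def kdot_cvec sin_of_real[symmetric])
qed simp_all

lemma real_analytic_periodic_gen_fun: "real_analytic_periodic (gen_fun J)"
  by (simp add: gen_fun_def real_analytic_periodic_gen_coeff real_analytic_periodic_zero)

lemma gen_fun_mode_index: "inj p \<Longrightarrow> gen_fun (mode_index j) = gen_coeff j"
  by (simp add: gen_fun_def inj_mode_index)

lemma gen_fun_low_degree:
  assumes "mdeg J \<le> 1"
  shows "gen_fun J = (\<lambda>_. 0)"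
proof -
  have "J \<noteq> mode_index j" for j
    using assms mdeg_mode_index[of j] p_ge_2[of j] by auto
  then show ?thesis by (auto simp: gen_fun_def)
qed


lemma sum_grad_gen_fun:
  assumes "inj p"
  shows "(\<Sum>J\<in>{J. mdeg J \<le> K}. mmono r J *\<^sub>R grad (gen_fun J) \<theta>)
       = (\<Sum>j\<in>{j. p j \<le> K}. ((r $ i0) ^ p j * (- c j * cos (2*pi*(kvec j \<bullet> \<theta>)) / divisor j)) *\<^sub>R kvec j)"
proof -
  let ?S = "{J :: 'n \<Rightarrow> nat. mdeg J \<le> K}" and ?F = "{j. p j \<le> K}"
  let ?g = "\<lambda>J. mmono r J *\<^sub>R grad (gen_fun J) \<theta>"
  have "?g J = 0" if "J \<in> ?S - mode_index ` ?F" for J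
  proof -
    have "J \<notin> range mode_index" using that mdeg_mode_index by auto
    then show ?thesis by (simp add: gen_fun_def grad_const)
  qed
  then have "sum ?g ?S = sum ?g (mode_index ` ?F)"
    by (intro sum.mono_neutral_right[OF finite_mdeg_le]) (auto simp: mdeg_mode_index)
  also have "\<dots> = sum (?g \<circ> mode_index) ?F"
    using inj_mode_index[OF assms] by (intro sum.reindex) (auto intro: inj_on_subset)
  also have "\<dots> = (\<Sum>j\<in>?F. ((r $ i0) ^ p j * (- c j * cos (2*pi*(kvec j \<bullet> \<theta>)) / divisor j)) *\<^sub>R kvec j)"
    by (simp add: gen_fun_mode_index[OF assms] mmono_mode_index grad_gen_coeff)
  finally show ?thesis .
qed

lemma H_shift:
  assumes "finite F"
  shows "H \<theta> (r + (\<Sum>j\<in>F. ((r $ i0) ^ p j * (- c j * cos (2*pi*(kvec j \<bullet> \<theta>)) / divisor j)) *\<^sub>R kvec j))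
       = \<omega> \<bullet> r + (\<Sum>j. if j \<in> F then 0 else c j * (r $ i0) ^ p j * cos (2*pi*(kvec j \<bullet> \<theta>)))"
proof -
  let ?v = "\<Sum>j\<in>F. ((r $ i0) ^ p j * (- c j * cos (2*pi*(kvec j \<bullet> \<theta>)) / divisor j)) *\<^sub>R kvec j"
  have "?v $ i0 = 0" by (simp add: kvec_nth_i0)
  moreover have "\<omega> \<bullet> ?v = - (\<Sum>j\<in>F. c j * (r $ i0) ^ p j * cos (2*pi*(kvec j \<bullet> \<theta>)))"
    using divisor_neq_0 by (simp add: inner_sum_right divisor_def inner_commute sum_negf mult_ac)
  ultimately have "H \<theta> (r + ?v) = \<omega> \<bullet> r + (pert \<theta> (r $ i0) - (\<Sum>j\<in>F. c j * (r $ i0) ^ p j * cos (2*pi*(kvec j \<bullet> \<theta>))))"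
    by (simp add: H_def inner_add_right)
  also have "\<dots> = \<omega> \<bullet> r + (\<Sum>j. if j \<in> F then 0 else c j * (r $ i0) ^ p j * cos (2*pi*(kvec j \<bullet> \<theta>)))"
    unfolding pert_def by (subst suminf_minus_sum[OF summable_pert assms]) rule
  finally show ?thesis .
qed

lemma has_BNF_H:
  assumes "inj p"
  shows "has_BNF H (lin_coeffs \<omega>)"
  unfolding has_BNF_def
proof (intro exI[of _ gen_fun] conjI allI impI)
  show "real_analytic_periodic (gen_fun J)" for J
    by (rule real_analytic_periodic_gen_fun)
  show "gen_fun J = (\<lambda>_. 0)" if "mdeg J \<le> 1" for J
    using that by (rule gen_fun_low_degree)
  fix K \<theta>
  let ?F = "{j. p j \<le> K}"
  have fin: "finite ?F"
    using finite_vimageI[OF finite_atMost[of K] assms] by (simp add: vimage_def)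
  show "\<exists>C \<delta>. 0 < \<delta> \<and> (\<forall>r. norm r < \<delta> \<longrightarrow>
      \<bar>H \<theta> (r + (\<Sum>J\<in>{J. mdeg J \<le> K}. mmono r J *\<^sub>R grad (gen_fun J) \<theta>))
        - (\<Sum>J\<in>{J. mdeg J \<le> K}. lin_coeffs \<omega> J * mmono r J)\<bar> \<le> C * norm r ^ (K + 1))"
  proof (intro exI conjI allI impI)
    fix r :: "real^'n" assume r: "norm r < 1"
    have s: "\<bar>r $ i0\<bar> \<le> norm r" by (rule component_le_norm_cart)
    define T where "T = (\<Sum>j. if j \<in> ?F then 0 else c j * (r $ i0) ^ p j * cos (2*pi*(kvec j \<bullet> \<theta>)))"
    have "\<bar>T\<bar> \<le> (\<Sum>j. \<bar>c j\<bar>) * norm r ^ (K + 1)"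
      using abs_pert_tail_le[of "r $ i0" ?F K \<theta>] s r
        mult_left_mono[OF power_mono[OF s, of "K + 1"] suminf_nonneg[OF summable_abs_c]]
      unfolding T_def by fastforce
    moreover have "\<bar>if 1 \<le> K then 0 else \<omega> \<bullet> r\<bar> \<le> norm \<omega> * norm r ^ (K + 1)"
      using Cauchy_Schwarz_ineq2[of \<omega> r] by (cases K) auto
    moreover have "H \<theta> (r + (\<Sum>J\<in>{J. mdeg J \<le> K}. mmono r J *\<^sub>R grad (gen_fun J) \<theta>))
        - (\<Sum>J\<in>{J. mdeg J \<le> K}. lin_coeffs \<omega> J * mmono r J) = (if 1 \<le> K then 0 else \<omega> \<bullet> r) + T"
      unfolding sum_grad_gen_fun[OF assms] H_shift[OF fin] sum_lin_coeffs_mmono T_def by simp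
    ultimately show "\<bar>H \<theta> (r + (\<Sum>J\<in>{J. mdeg J \<le> K}. mmono r J *\<^sub>R grad (gen_fun J) \<theta>))
        - (\<Sum>J\<in>{J. mdeg J \<le> K}. lin_coeffs \<omega> J * mmono r J)\<bar>
        \<le> (norm \<omega> + (\<Sum>j. \<bar>c j\<bar>)) * norm r ^ (K + 1)"
      by (simp add: distrib_right abs_triangle_ineq add_mono order_trans[OF abs_triangle_ineq])
  qed (rule zero_less_one)
qed

end

section \<open>Escape-time bounds\<close>

lemma T_time_le: "t \<in> escape_times H \<rho> \<Longrightarrow> T_time H \<rho> \<le> t"
  unfolding T_time_def
  by (rule cInf_lower) (auto simp: escape_times_def bdd_below_def intro!: exI[of _ 0])

lemma root_le_exp_decay:
  fixes x :: real
  assumes "0 < x" "x ^ m \<le> exp (- ((real j + 1)^2))" "1 \<le> m" "real m \<le> 3 * (real j + 1)"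
  shows "x \<le> exp (-1/3) ^ j"
proof -
  have "x \<le> exp (- (real j + 1) / 3)"
  proof (rule ccontr)
    assume "\<not> ?thesis"
    then have "exp (- (real j + 1) / 3) ^ m < x ^ m"
      using power_strict_mono[of "exp (- (real j + 1) / 3)" x m] assms(3) by simp
    then have "exp (real m * (- (real j + 1) / 3)) < x ^ m"
      by (simp only: exp_of_nat_mult)
    moreover have "- ((real j + 1)^2) \<le> real m * (- (real j + 1) / 3)"
      using mult_right_mono[OF assms(4), of "real j + 1"] by (simp add: power2_eq_square field_simps)
    ultimately show False using assms(2) by (meson exp_le_cancel_iff le_less_trans not_le)
  qed
  also have "\<dots> \<le> exp (- real j / 3)" by simp
  also have "\<dots> = exp (-1/3) ^ j" by (simp add: exp_of_nat_mult[symmetric])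
  finally show ?thesis .
qed

lemma exp_neg_square_le_power:
  assumes "0 < \<rho>" "\<rho> < 1"
  shows "\<exists>j. exp (- ((real j + 1)^2)) \<le> \<rho> ^ (j + 3)"
proof
  define L where "L = - ln \<rho>"
  define j where "j = nat \<lceil>2 * L\<rceil> + 1"
  have L: "0 < L" "2 * L \<le> real j + 1" "1 \<le> j"
    using assms by (simp_all add: L_def j_def) linarith
  have "real (j + 3) * L \<le> (real j + 1) * (2 * L)"
    using L by (simp add: algebra_simps)
  also have "\<dots> \<le> (real j + 1)^2"
    using L by (simp add: power2_eq_square mult_left_mono)
  finally have "exp (- ((real j + 1)^2)) \<le> exp (real (j + 3) * ln \<rho>)"
    by (simp add: L_def)
  also have "\<dots> = \<rho> ^ (j + 3)"
    using assms exp_of_nat_mult[of "j + 3" "ln \<rho>"] by simp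
  finally show "exp (- ((real j + 1)^2)) \<le> \<rho> ^ (j + 3)" .
qed

context liouville_ham
begin

lemma T_time_le_powr:
  assumes \<rho>: "0 < \<rho>" "\<rho> < 1" and small: "\<bar>divisor j\<bar> \<le> 2 * \<rho> ^ (p j + 1) * \<bar>c j\<bar>"
    and "\<rho> ^ n \<le> 2 * \<bar>divisor j\<bar>"
  shows "escape_times H \<rho> \<noteq> {} \<and> T_time H \<rho> \<le> \<rho> powr (- real n)"
proof -
  obtain t where t: "t \<in> escape_times H \<rho>" "t \<le> 1 / (2 * \<bar>divisor j\<bar>)"
    using escape_time_exists[OF \<rho> small] by blast
  have "T_time H \<rho> \<le> 1 / (2 * \<bar>divisor j\<bar>)"
    using T_time_le[OF t(1)] t(2) by simp
  also have "\<dots> \<le> 1 / \<rho> ^ n"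
    using assms divisor_neq_0[of j] by (intro divide_left_mono) auto
  also have "\<dots> = \<rho> powr (- real n)"
    using \<rho> by (simp add: powr_minus powr_realpow divide_inverse)
  finally show ?thesis using t by blast
qed

end

locale liouville_ham_small = liouville_ham +
  assumes divisor_small: "\<And>j. \<bar>divisor j\<bar> \<le> \<bar>c j\<bar> ^ 4 * exp (- ((real j + 1)^2))"
    and abs_c_le_1: "\<And>j. \<bar>c j\<bar> \<le> 1"
    and c_nonzero: "\<And>j. c j \<noteq> 0"
begin

text \<open>\<open>radius n j\<close> solves \<open>\<bar>divisor j\<bar> = 2 \<rho>^n \<bar>c j\<bar>\<close>, the threshold of \<open>escape_time_exists\<close>.\<close>

definition scale :: "nat \<Rightarrow> real" where
  "scale j = \<bar>divisor j\<bar> / (2 * \<bar>c j\<bar>)"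

definition radius :: "nat \<Rightarrow> nat \<Rightarrow> real" where
  "radius n j = root n (scale j)"

lemma scale_pos: "0 < scale j"
  using divisor_neq_0[of j] c_nonzero[of j] by (simp add: scale_def)

lemma abs_c_pow_4: "\<bar>c j\<bar> ^ 4 = \<bar>c j\<bar> * \<bar>c j\<bar> ^ 3" "\<bar>c j\<bar> ^ 3 \<le> 1"
  by (simp add: eval_nat_numeral) (rule power_le_one[OF abs_ge_zero abs_c_le_1])

lemma divisor_le_abs_c: "\<bar>divisor j\<bar> \<le> \<bar>c j\<bar> ^ 4"
  using divisor_small[of j] mult_left_mono[of "exp (- ((real j + 1)^2))" 1 "\<bar>c j\<bar> ^ 4"] by simp

lemma divisor_le_abs_c_exp: "\<bar>divisor j\<bar> \<le> \<bar>c j\<bar> * exp (- ((real j + 1)^2))"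
proof -
  have "\<bar>c j\<bar> ^ 4 \<le> \<bar>c j\<bar>"
    using abs_c_pow_4[of j] mult_left_mono[of "\<bar>c j\<bar> ^ 3" 1 "\<bar>c j\<bar>"] by simp
  then show ?thesis
    by (rule order_trans[OF divisor_small mult_right_mono]) simp
qed

lemma scale_le_exp: "scale j \<le> exp (- ((real j + 1)^2))"
  using divisor_le_abs_c_exp[of j] c_nonzero[of j] by (simp add: scale_def field_simps)

lemma scale_le_cube: "scale j \<le> \<bar>c j\<bar> ^ 3"
  using divisor_le_abs_c[of j] abs_c_pow_4[of j] c_nonzero[of j] by (simp add: scale_def field_simps)

lemma scale_sq_le: "scale j ^ 2 \<le> 2 * \<bar>divisor j\<bar>"
proof -
  have "scale j ^ 2 \<le> \<bar>c j\<bar> ^ 3 * scale j"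
    using scale_le_cube[of j] scale_pos[of j] by (simp add: power2_eq_square)
  also have "\<dots> = \<bar>c j\<bar> ^ 2 * (\<bar>divisor j\<bar> / 2)"
    using c_nonzero[of j] by (simp add: scale_def power2_eq_square power3_eq_cube)
  also have "\<dots> \<le> 1 * (\<bar>divisor j\<bar> / 2)"
    using power_le_one[OF abs_ge_zero abs_c_le_1, of j 2] by (intro mult_right_mono) simp_all
  finally show ?thesis by simp
qed

lemma scale_lt_1: "scale j < 1"
  using scale_le_exp[of j] by (simp add: order_le_less_trans)

lemma
  assumes "0 < n"
  shows radius_pos: "0 < radius n j" and radius_lt_1: "radius n j < 1"
    and radius_pow: "radius n j ^ n = scale j"
  using assms scale_pos[of j] scale_lt_1[of j] by (simp_all add: radius_def real_root_gt_zero)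

lemma divisor_eq_radius: "0 < n \<Longrightarrow> \<bar>divisor j\<bar> = 2 * radius n j ^ n * \<bar>c j\<bar>"
  using c_nonzero[of j] by (simp add: radius_pow scale_def)

lemma radius_le_exp_decay: "radius (p j + 1) j \<le> exp (-1/3) ^ j"
proof (rule root_le_exp_decay)
  show "radius (p j + 1) j ^ (p j + 1) \<le> exp (- ((real j + 1)^2))"
    using radius_pow[of "p j + 1" j] scale_le_exp[of j] by (simp del: power_Suc)
qed (use radius_pos[of "p j + 1" j] p_le[of j] in auto)

lemma tendsto_radius_0:
  assumes "filterlim J sequentially sequentially"
  shows "(\<lambda>n. radius (p (J n) + 1) (J n)) \<longlonglongrightarrow> 0"
proof -
  have "(\<lambda>j. exp (-1/3::real) ^ j) \<longlonglongrightarrow> 0"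
    by (rule LIMSEQ_power_zero) simp
  from filterlim_compose[OF this assms]
  have lim: "(\<lambda>n. exp (-1/3::real) ^ J n) \<longlonglongrightarrow> 0" .
  show ?thesis
    by (rule tendsto_sandwich[OF always_eventually always_eventually tendsto_const lim])
      (intro allI less_imp_le radius_pos radius_le_exp_decay; simp)+
qed

lemma escape_at_radius:
  assumes "radius (p j + 1) j ^ n \<le> 2 * \<bar>divisor j\<bar>"
  shows "escape_times H (radius (p j + 1) j) \<noteq> {} \<and>
    T_time H (radius (p j + 1) j) \<le> radius (p j + 1) j powr (- real n)"
proof -
  have cond: "\<bar>divisor j\<bar> \<le> 2 * radius (p j + 1) j ^ (p j + 1) * \<bar>c j\<bar>"
    by (rule eq_refl, rule divisor_eq_radius) simp
  show ?thesis
    by (rule T_time_le_powr[OF radius_pos radius_lt_1 cond assms]) simp_all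
qed

lemma radius_3_le_abs_c: "radius 3 j \<le> \<bar>c j\<bar>"
  by (rule power_le_imp_le_base[of _ 2]) (use scale_le_cube[of j] radius_pow[of 3 j] in simp_all)

lemma diffusive_H: "diffusive H"
  unfolding diffusive_def
proof (intro exI[of _ 1] conjI allI impI)
  fix \<rho> :: real assume \<rho>: "0 < \<rho> \<and> \<rho> < 1"
  obtain j where j: "exp (- ((real j + 1)^2)) \<le> \<rho> ^ (j + 3)"
    using exp_neg_square_le_power[of \<rho>] \<rho> by blast
  have "\<bar>divisor j\<bar> \<le> \<bar>c j\<bar> * exp (- ((real j + 1)^2))"
    by (rule divisor_le_abs_c_exp)
  also have "\<dots> \<le> \<bar>c j\<bar> * \<rho> ^ (p j + 1)"
    using j \<rho> p_le[of j] power_decreasing[of "p j + 1" "j + 3" \<rho>] by (intro mult_left_mono) auto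
  also have "\<dots> \<le> 2 * \<rho> ^ (p j + 1) * \<bar>c j\<bar>"
    using \<rho> by simp
  finally show "escape_times H \<rho> \<noteq> {}"
    using escape_time_exists[of \<rho> j] \<rho> by blast
qed simp

lemma fast_escape_sequence:
  assumes p: "\<And>j. p j = j + 2"
  shows "\<exists>rs. (\<forall>n. rs n > 0) \<and> rs \<longlonglongrightarrow> 0 \<and>
    (\<forall>\<^sub>F n in sequentially. escape_times H (rs n) \<noteq> {} \<and> T_time H (rs n) \<le> rs n powr (- real n))"
proof (intro exI conjI allI)
  define J where "J n = n div 2 - 3" for n :: nat
  let ?rs = "\<lambda>n. radius (p (J n) + 1) (J n)"
  show "0 < ?rs n" for n
    by (simp add: radius_pos)
  have "filterlim J sequentially sequentially"
    unfolding filterlim_at_top eventually_sequentially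
  proof
    fix Z show "\<exists>N. \<forall>n\<ge>N. Z \<le> J n" unfolding J_def by (rule exI[of _ "2 * Z + 6"]) presburger
  qed
  then show "?rs \<longlonglongrightarrow> 0"
    by (rule tendsto_radius_0)
  show "\<forall>\<^sub>F n in sequentially. escape_times H (?rs n) \<noteq> {} \<and> T_time H (?rs n) \<le> ?rs n powr (- real n)"
    unfolding eventually_sequentially
  proof (intro exI allI impI)
    fix n :: nat assume "6 \<le> n"
    then have "2 * (p (J n) + 1) \<le> n"
      unfolding p J_def by presburger
    then have "?rs n ^ n \<le> ?rs n ^ (2 * (p (J n) + 1))"
      by (intro power_decreasing) (simp_all add: less_imp_le radius_pos radius_lt_1)
    also have "\<dots> = (?rs n ^ (p (J n) + 1)) ^ 2"
      by (simp only: power_mult[symmetric] mult.commute)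
    also have "\<dots> = scale (J n) ^ 2"
      using radius_pow[of "p (J n) + 1" "J n"] by (simp del: power_Suc)
    also have "\<dots> \<le> 2 * \<bar>divisor (J n)\<bar>"
      by (rule scale_sq_le)
    finally show "escape_times H (?rs n) \<noteq> {} \<and> T_time H (?rs n) \<le> ?rs n powr (- real n)"
      by (rule escape_at_radius)
  qed
qed

lemma quartic_escape_sequence:
  assumes p: "\<And>j. p j = 2"
  shows "\<exists>rs. (\<forall>n. rs n > 0) \<and> rs \<longlonglongrightarrow> 0 \<and>
    (\<forall>n. escape_times H (rs n) \<noteq> {} \<and> T_time H (rs n) \<le> rs n powr (- 4))"
proof (intro exI conjI)
  let ?rs = "\<lambda>n. radius (p n + 1) n"
  show "\<forall>n. 0 < ?rs n"
    by (simp add: radius_pos)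
  show "?rs \<longlonglongrightarrow> 0"
    using tendsto_radius_0[OF filterlim_ident] by simp
  show "\<forall>n. escape_times H (?rs n) \<noteq> {} \<and> T_time H (?rs n) \<le> ?rs n powr (- 4)"
  proof
    fix n
    have "radius 3 n ^ 4 = radius 3 n ^ 3 * radius 3 n"
      by (simp add: power_Suc2[of _ 3, simplified])
    also have "\<dots> = scale n * radius 3 n"
      by (simp add: radius_pow)
    also have "\<dots> \<le> scale n * \<bar>c n\<bar>"
      using scale_pos[of n] radius_3_le_abs_c[of n] by (intro mult_left_mono) auto
    also have "\<dots> \<le> 2 * \<bar>divisor n\<bar>"
      using c_nonzero[of n] by (simp add: scale_def)
    finally show "escape_times H (?rs n) \<noteq> {} \<and> T_time H (?rs n) \<le> ?rs n powr (- 4)"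
      using escape_at_radius[of n 4] by (simp add: p)
  qed
qed

end

section \<open>Choosing the modes from the Liouville sequence\<close>

lemma liouville_subsequence:
  fixes \<omega> :: "real^'n" and kbar :: "nat \<Rightarrow> 'n \<Rightarrow> int" and b :: "nat \<Rightarrow> real"
  assumes liouv: "filterlim (\<lambda>j. ln \<bar>\<Sum>i\<in>UNIV - {i0}. of_int (kbar j i) * \<omega> $ i\<bar>
                  / real_of_int (Max ((\<lambda>i. \<bar>kbar j i\<bar>) ` (UNIV - {i0}))))
                at_bot sequentially"
  shows "\<exists>m \<sigma>. \<forall>j. kbar (\<sigma> j) m \<noteq> 0 \<and>
    ln \<bar>\<Sum>i\<in>UNIV - {i0}. of_int (kbar (\<sigma> j) i) * \<omega> $ i\<bar>
      / real_of_int (Max ((\<lambda>i. \<bar>kbar (\<sigma> j) i\<bar>) ` (UNIV - {i0}))) \<le> b j"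
proof -
  define ratio where "ratio x = ln \<bar>\<Sum>i\<in>UNIV - {i0}. of_int (kbar x i) * \<omega> $ i\<bar>
    / real_of_int (Max ((\<lambda>i. \<bar>kbar x i\<bar>) ` (UNIV - {i0})))" for x
  have ev: "\<exists>X. \<forall>x\<ge>X. ratio x \<le> Z" for Z
    using liouv unfolding filterlim_at_bot eventually_sequentially ratio_def by blast
  have "\<exists>m. infinite {x. kbar x m \<noteq> 0}"
  proof (rule ccontr)
    assume "\<nexists>m. infinite {x. kbar x m \<noteq> 0}"
    then have "finite (\<Union>m. {x. kbar x m \<noteq> 0})" by auto
    then obtain B where B: "\<And>x m. kbar x m \<noteq> 0 \<Longrightarrow> x \<le> B"
      unfolding finite_nat_set_iff_bounded_le by blast
    obtain X where X: "\<And>x. X \<le> x \<Longrightarrow> ratio x \<le> -1"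
      using ev[of "-1"] by blast
    have "kbar (max X (Suc B)) = (\<lambda>_. 0)"
      using B by fastforce
    then show False
      using X[of "max X (Suc B)"] by (simp add: ratio_def)
  qed
  then obtain m where m: "infinite {x. kbar x m \<noteq> 0}" by blast
  have "\<exists>x. kbar x m \<noteq> 0 \<and> ratio x \<le> b j" for j
  proof -
    obtain X where "\<And>x. X \<le> x \<Longrightarrow> ratio x \<le> b j" using ev[of "b j"] by blast
    moreover obtain x where "X \<le> x" "kbar x m \<noteq> 0"
      using m unfolding infinite_nat_iff_unbounded_le by blast
    ultimately show ?thesis by blast
  qed
  then show ?thesis unfolding ratio_def by metis
qed

lemma sgn_mult_div_nonneg: "0 \<le> E \<Longrightarrow> 0 \<le> sgn (d * a) * E * a / (d::real)"
  by (cases d "0::real" rule: linorder_cases; cases a "0::real" rule: linorder_cases)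
    (simp_all add: sgn_mult zero_le_divide_iff divide_le_0_iff zero_le_mult_iff mult_le_0_iff)

lemma summable_exp_decay:
  fixes N :: "nat \<Rightarrow> real"
  assumes N: "\<And>j. 0 \<le> N j"
  shows "summable (\<lambda>j. exp (- ((real j + 1)^2 * (N j + 1))) * exp (B * ((real j + 1) * (N j + 1))))"
proof (rule summable_comparison_test_ev)
  show "summable (\<lambda>j. exp (-1::real) ^ j)" by (rule summable_geometric) simp
  show "\<forall>\<^sub>F j in sequentially.
      norm (exp (- ((real j + 1)^2 * (N j + 1))) * exp (B * ((real j + 1) * (N j + 1)))) \<le> exp (-1) ^ j"
    unfolding eventually_sequentially
  proof (intro exI allI impI)
    fix j assume "nat \<lceil>B\<rceil> \<le> j"
    then have B: "B - (real j + 1) \<le> -1" by linarith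
    define P where "P = (real j + 1) * (N j + 1)"
    have P: "real j + 1 \<le> P"
      using N[of j] mult_left_mono[of 1 "N j + 1" "real j + 1"] by (simp add: P_def)
    have "- ((real j + 1)^2 * (N j + 1)) + B * P = P * (B - (real j + 1))"
      by (simp add: P_def power2_eq_square algebra_simps)
    also have "\<dots> \<le> P * (-1)"
      using B P by (intro mult_left_mono) auto
    also have "\<dots> \<le> real j * (-1)"
      using P by simp
    finally have "- ((real j + 1)^2 * (N j + 1)) + B * ((real j + 1) * (N j + 1)) \<le> real j * (-1)"
      by (simp add: P_def)
    then show "norm (exp (- ((real j + 1)^2 * (N j + 1))) * exp (B * ((real j + 1) * (N j + 1))))
        \<le> exp (-1) ^ j"
      by (simp add: exp_add[symmetric] exp_of_nat_mult[symmetric])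
  qed
qed

lemma abs_le_exp_of_ln_div_le:
  fixes x N B :: real
  assumes "x \<noteq> 0" "0 < N" "ln \<bar>x\<bar> / N \<le> B"
  shows "\<bar>x\<bar> \<le> exp (B * N)"
proof -
  have "ln \<bar>x\<bar> \<le> B * N" using assms(2,3) by (simp add: divide_le_eq)
  then show ?thesis using assms(1) by (metis zero_less_abs_iff exp_le_cancel_iff exp_ln)
qed


lemma liouville_modes:
  fixes \<omega> :: "real^'n" and i0 :: 'n and kbar :: "nat \<Rightarrow> 'n \<Rightarrow> int"
  assumes nonres: "\<forall>k :: 'n \<Rightarrow> int. (\<Sum>i\<in>UNIV. of_int (k i) * \<omega> $ i) = 0 \<longrightarrow> k = (\<lambda>_. 0)"
    and kbar_last: "\<forall>j. kbar j i0 = 0"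
    and liouv: "filterlim (\<lambda>j. ln \<bar>\<Sum>i\<in>UNIV - {i0}. of_int (kbar j i) * \<omega> $ i\<bar>
                  / real_of_int (Max ((\<lambda>i. \<bar>kbar j i\<bar>) ` (UNIV - {i0}))))
                at_bot sequentially"
  shows "\<exists>m k N. \<forall>j. k j i0 = 0 \<and> k j m \<noteq> 0 \<and> (\<forall>i. \<bar>real_of_int (k j i)\<bar> \<le> N j) \<and> 1 \<le> N j \<and>
    (\<chi> i. real_of_int (k j i)) \<bullet> \<omega> \<noteq> 0 \<and>
    \<bar>(\<chi> i. real_of_int (k j i)) \<bullet> \<omega>\<bar> \<le> exp (- (9 * (real j + 1)^2) * N j)"
proof -
  obtain m \<sigma> where \<sigma>: "\<And>j. kbar (\<sigma> j) m \<noteq> 0"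
    and ratio: "\<And>j. ln \<bar>\<Sum>i\<in>UNIV - {i0}. of_int (kbar (\<sigma> j) i) * \<omega> $ i\<bar>
      / real_of_int (Max ((\<lambda>i. \<bar>kbar (\<sigma> j) i\<bar>) ` (UNIV - {i0}))) \<le> - (9 * (real j + 1)^2)"
    using liouville_subsequence[OF liouv, of "\<lambda>j. - (9 * (real j + 1)^2)"] by blast
  define k where "k j = kbar (\<sigma> j)" for j
  define N where "N j = real_of_int (Max ((\<lambda>i. \<bar>k j i\<bar>) ` (UNIV - {i0})))" for j
  define d where "d j = (\<chi> i. real_of_int (k j i)) \<bullet> \<omega>" for j
  have k_i0: "k j i0 = 0" for j
    using kbar_last by (simp add: k_def)
  have k_m: "k j m \<noteq> 0" for j
    using \<sigma> by (simp add: k_def)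
  have "m \<noteq> i0"
    using k_i0 k_m by metis
  have abs_k_le: "\<bar>real_of_int (k j i)\<bar> \<le> N j" for j i
  proof (cases "i = i0")
    case False
    then have "\<bar>k j i\<bar> \<le> Max ((\<lambda>i. \<bar>k j i\<bar>) ` (UNIV - {i0}))"
      by simp
    then show ?thesis by (simp add: N_def flip: of_int_abs)
  next
    case True
    have "\<bar>k j m\<bar> \<le> Max ((\<lambda>i. \<bar>k j i\<bar>) ` (UNIV - {i0}))"
      using \<open>m \<noteq> i0\<close> by simp
    then show ?thesis using True k_i0 by (simp add: N_def)
  qed
  have N_ge_1: "1 \<le> N j" for j
    using abs_k_le[of j m] k_m[of j] by linarith
  have d_eq: "d j = (\<Sum>i\<in>UNIV - {i0}. of_int (kbar (\<sigma> j) i) * \<omega> $ i)" for j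
    using sum.remove[of UNIV i0 "\<lambda>i. real_of_int (k j i) * \<omega> $ i"] k_i0[of j]
    by (simp add: d_def k_def inner_vec_def)
  have d_nonzero: "d j \<noteq> 0" for j
    using nonres k_m[of j] by (auto simp: d_def inner_vec_def)
  have "\<bar>d j\<bar> \<le> exp (- (9 * (real j + 1)^2) * N j)" for j
  proof (rule abs_le_exp_of_ln_div_le[OF d_nonzero])
    show "0 < N j" using N_ge_1[of j] by simp
    show "ln \<bar>d j\<bar> / N j \<le> - (9 * (real j + 1)^2)" using ratio[of j] by (simp add: d_eq N_def k_def)
  qed
  then show ?thesis
    using k_i0 k_m abs_k_le N_ge_1 d_nonzero unfolding d_def by blast
qed

text \<open>The amplitudes \<open>\<bar>c j\<bar> = exp (- (j + 1)\<^sup>2 (N j + 1))\<close> are small enough for \<open>H\<close> to be entire, yet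
  \<open>\<bar>c j\<bar>\<^sup>4\<close> still dominates the divisor; the sign of \<open>c j\<close> aligns the drift of every mode along \<open>m\<close>.\<close>

lemma liouville_ham_small_exists:
  fixes \<omega> :: "real^'n" and i0 :: 'n and kbar :: "nat \<Rightarrow> 'n \<Rightarrow> int"
  assumes nonres: "\<forall>k :: 'n \<Rightarrow> int. (\<Sum>i\<in>UNIV. of_int (k i) * \<omega> $ i) = 0 \<longrightarrow> k = (\<lambda>_. 0)"
    and kbar_last: "\<forall>j. kbar j i0 = 0"
    and liouv: "filterlim (\<lambda>j. ln \<bar>\<Sum>i\<in>UNIV - {i0}. of_int (kbar j i) * \<omega> $ i\<bar>
                  / real_of_int (Max ((\<lambda>i. \<bar>kbar j i\<bar>) ` (UNIV - {i0}))))
                at_bot sequentially"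
  shows "\<exists>m k c N. \<forall>p. (\<forall>j. 2 \<le> p j \<and> p j \<le> j + 2) \<longrightarrow> liouville_ham_small \<omega> i0 m k c p N"
proof -
  obtain m k N where k_i0: "\<And>j. k j i0 = 0" and k_m: "\<And>j. k j m \<noteq> 0"
    and abs_k_le: "\<And>j i. \<bar>real_of_int (k j i)\<bar> \<le> N j" and N_ge_1: "\<And>j. 1 \<le> N j"
    and d_nonzero: "\<And>j. (\<chi> i. real_of_int (k j i)) \<bullet> \<omega> \<noteq> 0"
    and d_small: "\<And>j. \<bar>(\<chi> i. real_of_int (k j i)) \<bullet> \<omega>\<bar> \<le> exp (- (9 * (real j + 1)^2) * N j)"
    using liouville_modes[OF nonres kbar_last liouv] by metis
  define d where "d j = (\<chi> i. real_of_int (k j i)) \<bullet> \<omega>" for j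
  define E where "E j = exp (- ((real j + 1)^2 * (N j + 1)))" for j
  define c where "c j = sgn (d j * real_of_int (k j m)) * E j" for j
  have abs_c: "\<bar>c j\<bar> = E j" for j
    using d_nonzero[of j] k_m[of j] by (simp add: c_def d_def E_def abs_mult abs_sgn_eq)
  have small: "\<bar>d j\<bar> \<le> \<bar>c j\<bar> ^ 4 * exp (- ((real j + 1)^2))" for j
  proof -
    have "(real j + 1)^2 * (4 * N j + 5) \<le> (real j + 1)^2 * (9 * N j)"
      using N_ge_1[of j] by (intro mult_left_mono) auto
    then have "exp (- (9 * (real j + 1)^2) * N j) \<le> exp (- ((real j + 1)^2 * (4 * N j + 5)))"
      by (simp add: algebra_simps)
    then have "\<bar>d j\<bar> \<le> exp (- ((real j + 1)^2 * (4 * N j + 5)))"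
      using d_small[of j] unfolding d_def by linarith
    also have "\<dots> = \<bar>c j\<bar> ^ 4 * exp (- ((real j + 1)^2))"
      by (simp add: abs_c E_def exp_of_nat_mult[symmetric] exp_add[symmetric] algebra_simps)
    finally show ?thesis .
  qed
  have "liouville_ham_small \<omega> i0 m k c p N" if p: "\<And>j. 2 \<le> p j \<and> p j \<le> j + 2" for p
  proof -
    interpret liouville_ham \<omega> i0 m k c p N
    proof
      show "0 \<le> c j * real_of_int (k j m) / ((\<chi> i. real_of_int (k j i)) \<bullet> \<omega>)" for j
        using sgn_mult_div_nonneg[of "E j" "d j" "real_of_int (k j m)"] by (simp add: c_def E_def d_def)
      show "summable (\<lambda>j. \<bar>c j\<bar> * exp (B * ((real j + 1) * (N j + 1))))" for B
        using summable_exp_decay[of N B] order_trans[OF zero_le_one N_ge_1] by (simp add: abs_c E_def)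
    qed (use k_i0 k_m abs_k_le d_nonzero p in simp_all)
    show ?thesis
    proof
      show "\<bar>divisor j\<bar> \<le> \<bar>c j\<bar> ^ 4 * exp (- ((real j + 1)^2))" for j
        using small[of j] by (simp add: divisor_def kvec_def d_def)
      show "\<bar>c j\<bar> \<le> 1" "c j \<noteq> 0" for j
        using abs_c[of j] N_ge_1[of j] by (auto simp: E_def)
    qed
  qed
  then show ?thesis by blast
qed

theorem theoremD:
  fixes \<omega> :: "real^'n" and i0 :: 'n and kbar :: "nat \<Rightarrow> 'n \<Rightarrow> int"
  assumes dim: "CARD('n) \<ge> 3"
    and nonres: "\<forall>k :: 'n \<Rightarrow> int. (\<Sum>i\<in>UNIV. of_int (k i) * \<omega> $ i) = 0 \<longrightarrow> k = (\<lambda>_. 0)"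
    and kbar_last: "\<forall>j. kbar j i0 = 0"
    and liouv: "filterlim (\<lambda>j. ln \<bar>\<Sum>i\<in>UNIV - {i0}. of_int (kbar j i) * \<omega> $ i\<bar>
                  / real_of_int (Max ((\<lambda>i. \<bar>kbar j i\<bar>) ` (UNIV - {i0}))))
                at_bot sequentially"
  shows "(\<exists>H. real_entire_ham H \<and> ham_form H \<omega> \<and> has_BNF H (lin_coeffs \<omega>) \<and>
             diffusive H \<and>
             (\<exists>rs :: nat \<Rightarrow> real. (\<forall>n. rs n > 0) \<and> rs \<longlonglongrightarrow> 0 \<and>
                (\<forall>\<^sub>F n in sequentially. escape_times H (rs n) \<noteq> {} \<and>
                    T_time H (rs n) \<le> rs n powr (- real n))))
       \<and> (\<exists>H. real_entire_ham H \<and> ham_form H \<omega> \<and> diffusive H \<and>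
             (\<exists>rs :: nat \<Rightarrow> real. (\<forall>n. rs n > 0) \<and> rs \<longlonglongrightarrow> 0 \<and>
                (\<forall>n. escape_times H (rs n) \<noteq> {} \<and> T_time H (rs n) \<le> rs n powr (- 4))))"
proof -
  obtain m k c N where data: "\<And>p. (\<forall>j. 2 \<le> p j \<and> p j \<le> j + 2) \<Longrightarrow> liouville_ham_small \<omega> i0 m k c p N"
    using liouville_ham_small_exists[OF nonres kbar_last liouv] by blast
  interpret fast: liouville_ham_small \<omega> i0 m k c "\<lambda>j. j + 2" N
    by (rule data) simp
  interpret quartic: liouville_ham_small \<omega> i0 m k c "\<lambda>j. 2" N
    by (rule data) simp
  have "inj (\<lambda>j::nat. j + 2)"
    by (simp add: inj_on_def)
  then show ?thesis
    using fast.real_entire_ham_H fast.ham_form_H fast.has_BNF_H fast.diffusive_H fast.fast_escape_sequence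
      quartic.real_entire_ham_H quartic.ham_form_H quartic.diffusive_H quartic.quartic_escape_sequence
    by blast
qed

end
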